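(* Let $\Lambda$ be a finite $k$-graph without sources, $r\in\mathbb R^k$, $\beta\in\mathbb R$, let $\psi$ be a $\beta$-harmonic vector for $\alpha^r$, and let $F$ be well chosen. Then there exist a unique collection $\mathcal C$ of $F$-harmonic components and unique numbers $t_C\in(0,1]$, $C\in\mathcal C$, such that $\psi=\sum_{C\in\mathcal C}t_C\,x_F^C$. Furthermore, every $C\in\mathcal C$ is positive, satisfies $C\not\le C'$ for all $C'\in\mathcal C\setminus\{C\}$, satisfies $\beta r=(\ln\rho(A_1^C),\dots,\ln\rho(A_k^C))$, and $x_F^C$ is a $\beta$-harmonic vector for $\alpha^r$.
   Context: A $k$-graph $(\Lambda,d)$ is a countable small category with functor $d:\Lambda\to\mathbb N^k$ having the unique factorisation property (for $d(\lambda)=m+n$ there are unique $\mu,\nu$ with $d(\mu)=m,d(\nu)=n,\lambda=\mu\nu$). $\Lambda^0=d^{-1}(0)$ are the vertices, $\Lambda^n=d^{-1}(n)$, $r,s$ range and source, $v\Lambda^nw=\{\lambda\in\Lambda^n:r(\lambda)=v,s(\lambda)=w\}$, $v\Lambda w=\bigcup_nv\Lambda^nw$, and for $V,W\subseteq\Lambda^0$, $V\Lambda W=\bigcup_{v\in V,w\in W}v\Lambda w$. Finite: each $\Lambda^n$ finite; without sources: $v\Lambda^n\neq\emptyset$ for all $v,n$. Vertex matrices $A_i(v,w)=|v\Lambda^{e_i}w|$, $A^n=\prod_iA_i^{n_i}$. A $\beta$-harmonic vector for $\alpha^r$ is $\psi\in[0,\infty)^{\Lambda^0}$ with $\sum_v\psi_v=1$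 and $A_i\psi=e^{\beta r_i}\psi$ for $i=1,\dots,k$. Define $v\le w$ iff $v\Lambda w\ne\emptyset$ and $v\sim w$ iff $v\le w$ and $w\le v$; the classes are components, partially ordered by $C\le D$ iff $C\Lambda D\ne\emptyset$. A component $C$ is trivial if $C\Lambda C=\{v\}$ for a single vertex, non-trivial otherwise; positive if $\rho(A_i^C)>0$ for all $i$. $\overline V=\{w\in\Lambda^0:w\Lambda V\ne\emptyset\}$. For a matrix $B$ and $R,S\subseteq\Lambda^0$, $B^{R,S}$ is the submatrix with rows $R$, columns $S$, $B^S=B^{S,S}$; $\rho$ is spectral radius. For a finite sequence $F=(a_1,\dots,a_m)$ in $\mathbb N^k\setminus\{0\}$ (repetitions allowed), $A_F=\sum_jA^{a_j}$; $F$ is well chosen if $A_F(v,w)>0$ iff $v\Lambda^lw\ne\emptyset$ for some $l\ne0$. A non-trivial component $C$ is $F$-harmonic if $\overline C\setminus C=\emptyset$ or $\rho(A_F^C)>\rho(A_F^{\overline C\setminus C})$. For an $F$-harmonic $C$, $x_F^C$ is the unique vector in $[0,\infty)^{\Lambda^0}$ of unit $1$-norm with $A_Fx_F^C=\rho(A_F^C)x_F^C$ and $(x_F^C)_v=0$ for $v\notin\overline C$. *)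

theory Defs
  imports "HOL-Analysis.Analysis" "HOL-Library.Function_Algebras"
begin

text \<open>A k-graph is a countable small category (morphisms of type 'a) whose objects are
identified with their identity morphisms, together with a degree functor into N^k.
Elements of N^k are represented as functions nat => nat supported on {1..k}.\<close>

record 'a kgraph =
  mor  :: "'a set"
  deg  :: "'a \<Rightarrow> nat \<Rightarrow> nat"
  rng  :: "'a \<Rightarrow> 'a"
  src  :: "'a \<Rightarrow> 'a"
  comp :: "'a \<Rightarrow> 'a \<Rightarrow> 'a"

definition Nk :: "nat \<Rightarrow> (nat \<Rightarrow> nat) set" where
  "Nk k = {n. \<forall>i. i \<notin> {1..k} \<longrightarrow> n i = 0}"

definition unitv :: "nat \<Rightarrow> nat \<Rightarrow> nat" where
  "unitv i = (\<lambda>j. if j = i then 1 else 0)"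

definition verts :: "'a kgraph \<Rightarrow> 'a set" where
  "verts G = {p\<in>mor G. deg G p = 0}"

definition is_kgraph :: "nat \<Rightarrow> 'a kgraph \<Rightarrow> bool" where
  "is_kgraph k G \<longleftrightarrow>
     0 < k \<and> countable (mor G) \<and>
     (\<forall>p\<in>mor G. deg G p \<in> Nk k) \<and>
     (\<forall>p\<in>mor G. rng G p \<in> verts G \<and> src G p \<in> verts G) \<and>
     (\<forall>v\<in>verts G. rng G v = v \<and> src G v = v) \<and>
     (\<forall>\<mu>\<in>mor G. \<forall>\<nu>\<in>mor G. src G \<mu> = rng G \<nu> \<longrightarrow>
         comp G \<mu> \<nu> \<in> mor G \<and> rng G (comp G \<mu> \<nu>) = rng G \<mu> \<and>
         src G (comp G \<mu> \<nu>) = src G \<nu> \<and> deg G (comp G \<mu> \<nu>) = deg G \<mu> + deg G \<nu>) \<and>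
     (\<forall>p\<in>mor G. \<forall>\<mu>\<in>mor G. \<forall>\<nu>\<in>mor G. src G p = rng G \<mu> \<longrightarrow> src G \<mu> = rng G \<nu> \<longrightarrow>
         comp G (comp G p \<mu>) \<nu> = comp G p (comp G \<mu> \<nu>)) \<and>
     (\<forall>p\<in>mor G. comp G (rng G p) p = p \<and> comp G p (src G p) = p) \<and>
     (\<forall>p\<in>mor G. \<forall>m\<in>Nk k. \<forall>n\<in>Nk k. deg G p = m + n \<longrightarrow>
         (\<exists>!q. fst q \<in> mor G \<and> snd q \<in> mor G \<and> deg G (fst q) = m \<and> deg G (snd q) = n \<and>
               src G (fst q) = rng G (snd q) \<and> comp G (fst q) (snd q) = p))"

definition paths :: "'a kgraph \<Rightarrow> (nat \<Rightarrow> nat) \<Rightarrow> 'a \<Rightarrow> 'a \<Rightarrow> 'a set" where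
  "paths G n v w = {p\<in>mor G. deg G p = n \<and> rng G p = v \<and> src G p = w}"

definition finite_kgraph :: "nat \<Rightarrow> 'a kgraph \<Rightarrow> bool" where
  "finite_kgraph k G \<longleftrightarrow> (\<forall>n\<in>Nk k. finite {p\<in>mor G. deg G p = n})"

definition no_sources :: "nat \<Rightarrow> 'a kgraph \<Rightarrow> bool" where
  "no_sources k G \<longleftrightarrow> (\<forall>v\<in>verts G. \<forall>n\<in>Nk k. \<exists>p\<in>mor G. rng G p = v \<and> deg G p = n)"

type_synonym 'a vmat = "'a \<Rightarrow> 'a \<Rightarrow> real"

definition mmult :: "'a set \<Rightarrow> 'a vmat \<Rightarrow> 'a vmat \<Rightarrow> 'a vmat" where
  "mmult V A B = (\<lambda>v w. \<Sum>u\<in>V. A v u * B u w)"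

definition mone :: "'a vmat" where
  "mone = (\<lambda>v w. if v = w then 1 else 0)"

primrec mpow :: "'a set \<Rightarrow> 'a vmat \<Rightarrow> nat \<Rightarrow> 'a vmat" where
  "mpow V A 0 = mone"
| "mpow V A (Suc m) = mmult V (mpow V A m) A"

definition vmatrix :: "'a kgraph \<Rightarrow> nat \<Rightarrow> 'a vmat" where
  "vmatrix G i = (\<lambda>v w. real (card (paths G (unitv i) v w)))"

definition vmatrix_pow :: "nat \<Rightarrow> 'a kgraph \<Rightarrow> (nat \<Rightarrow> nat) \<Rightarrow> 'a vmat" where
  "vmatrix_pow k G n =
     foldl (\<lambda>M i. mmult (verts G) M (mpow (verts G) (vmatrix G i) (n i))) mone [1..<Suc k]"

definition AF :: "nat \<Rightarrow> 'a kgraph \<Rightarrow> (nat \<Rightarrow> nat) list \<Rightarrow> 'a vmat" where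
  "AF k G F = (\<lambda>v w. \<Sum>a\<leftarrow>F. vmatrix_pow k G a v w)"

definition eigvals_on :: "'a set \<Rightarrow> 'a vmat \<Rightarrow> complex set" where
  "eigvals_on S B = {\<mu>. \<exists>x::'a \<Rightarrow> complex. (\<exists>v\<in>S. x v \<noteq> 0) \<and>
        (\<forall>v\<in>S. (\<Sum>w\<in>S. complex_of_real (B v w) * x w) = \<mu> * x v)}"

definition spec_rad :: "'a set \<Rightarrow> 'a vmat \<Rightarrow> real" where
  "spec_rad S B = Sup (cmod ` eigvals_on S B)"

text \<open>Vectors in [0,inf)^{Lambda^0} are functions vanishing off the vertex set.\<close>
definition harmonic_vec :: "nat \<Rightarrow> 'a kgraph \<Rightarrow> (nat \<Rightarrow> real) \<Rightarrow> real \<Rightarrow> ('a \<Rightarrow> real) \<Rightarrow> bool" where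
  "harmonic_vec k G r \<beta> \<psi> \<longleftrightarrow>
     (\<forall>v. v \<notin> verts G \<longrightarrow> \<psi> v = 0) \<and> (\<forall>v\<in>verts G. 0 \<le> \<psi> v) \<and>
     (\<Sum>v\<in>verts G. \<psi> v) = 1 \<and>
     (\<forall>i\<in>{1..k}. \<forall>v\<in>verts G.
        (\<Sum>w\<in>verts G. vmatrix G i v w * \<psi> w) = exp (\<beta> * r i) * \<psi> v)"

definition vle :: "'a kgraph \<Rightarrow> 'a \<Rightarrow> 'a \<Rightarrow> bool" where
  "vle G v w \<longleftrightarrow> (\<exists>p\<in>mor G. rng G p = v \<and> src G p = w)"

definition vequiv :: "'a kgraph \<Rightarrow> 'a \<Rightarrow> 'a \<Rightarrow> bool" where
  "vequiv G v w \<longleftrightarrow> vle G v w \<and> vle G w v"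

definition components :: "'a kgraph \<Rightarrow> 'a set set" where
  "components G = {C. \<exists>v\<in>verts G. C = {w\<in>verts G. vequiv G v w}}"

definition comp_le :: "'a kgraph \<Rightarrow> 'a set \<Rightarrow> 'a set \<Rightarrow> bool" where
  "comp_le G C D \<longleftrightarrow> (\<exists>v\<in>C. \<exists>w\<in>D. vle G v w)"

definition between :: "'a kgraph \<Rightarrow> 'a set \<Rightarrow> 'a set \<Rightarrow> 'a set" where
  "between G V W = {p\<in>mor G. rng G p \<in> V \<and> src G p \<in> W}"

definition trivial_comp :: "'a kgraph \<Rightarrow> 'a set \<Rightarrow> bool" where
  "trivial_comp G C \<longleftrightarrow> (\<exists>v. between G C C = {v})"

definition positive_comp :: "nat \<Rightarrow> 'a kgraph \<Rightarrow> 'a set \<Rightarrow> bool" where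
  "positive_comp k G C \<longleftrightarrow> (\<forall>i\<in>{1..k}. spec_rad C (vmatrix G i) > 0)"

definition upclosure :: "'a kgraph \<Rightarrow> 'a set \<Rightarrow> 'a set" where
  "upclosure G V = {w\<in>verts G. \<exists>v\<in>V. vle G w v}"

definition well_chosen :: "nat \<Rightarrow> 'a kgraph \<Rightarrow> (nat \<Rightarrow> nat) list \<Rightarrow> bool" where
  "well_chosen k G F \<longleftrightarrow>
     (\<forall>a\<in>set F. a \<in> Nk k \<and> a \<noteq> 0) \<and>
     (\<forall>v\<in>verts G. \<forall>w\<in>verts G.
        AF k G F v w > 0 \<longleftrightarrow> (\<exists>l\<in>Nk k. l \<noteq> 0 \<and> paths G l v w \<noteq> {}))"

definition F_harmonic :: "nat \<Rightarrow> 'a kgraph \<Rightarrow> (nat \<Rightarrow> nat) list \<Rightarrow> 'a set \<Rightarrow> bool" where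
  "F_harmonic k G F C \<longleftrightarrow>
     C \<in> components G \<and> \<not> trivial_comp G C \<and>
     (upclosure G C - C = {} \<or>
      spec_rad C (AF k G F) > spec_rad (upclosure G C - C) (AF k G F))"

definition xFC :: "nat \<Rightarrow> 'a kgraph \<Rightarrow> (nat \<Rightarrow> nat) list \<Rightarrow> 'a set \<Rightarrow> 'a \<Rightarrow> real" where
  "xFC k G F C = (THE x.
     (\<forall>v. v \<notin> verts G \<longrightarrow> x v = 0) \<and> (\<forall>v\<in>verts G. 0 \<le> x v) \<and>
     (\<Sum>v\<in>verts G. x v) = 1 \<and>
     (\<forall>v\<in>verts G. (\<Sum>w\<in>verts G. AF k G F v w * x w) = spec_rad C (AF k G F) * x v) \<and>
     (\<forall>v. v \<notin> upclosure G C \<longrightarrow> x v = 0))"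

end

theory Submission
  imports Defs
begin

text \<open>
  The proof is Perron--Frobenius theory for nonnegative matrices indexed by the finite vertex
  set. Harmonicity makes \<psi> an eigenvector of every A_i and of A_F, the latter with the positive
  eigenvalue \<rho> = \<Sum>_a e^{\<beta> r\<cdot>a}. Hence the support of \<psi> is closed under going down the path
  order, and the components C maximal among those inside the support form the collection of the
  theorem. On such a C the vector \<psi> is a positive eigenvector of A_F^C and of each A_i^C, which
  gives \<rho>(A_F^C) = \<rho> and \<rho>(A_i^C) = e^{\<beta> r_i}. Every other vertex of the support leaks mass of \<psi>
  towards these components, so \<psi> is strictly subinvariant for A_F there, and no eigenvector of A_F
  for \<rho> can live there. This yields the spectral gap making C F-harmonic, the decomposition of \<psi>,
  and, because A_i commutes with A_F, the harmonicity of x_F^C. Uniqueness follows from the linear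
  independence of the x_F^C, seen at a maximal component carrying a nonzero coefficient.
\<close>

section \<open>Nonnegative matrices on a finite index set\<close>

definition mvmult :: "'a set \<Rightarrow> 'a vmat \<Rightarrow> ('a \<Rightarrow> real) \<Rightarrow> 'a \<Rightarrow> real" where
  "mvmult D M x = (\<lambda>v. \<Sum>w\<in>D. M v w * x w)"

definition nonneg_on :: "'a set \<Rightarrow> 'a vmat \<Rightarrow> bool" where
  "nonneg_on D A \<longleftrightarrow> (\<forall>v\<in>D. \<forall>w\<in>D. 0 \<le> A v w)"

definition eigen_on :: "'a set \<Rightarrow> 'a vmat \<Rightarrow> real \<Rightarrow> ('a \<Rightarrow> real) \<Rightarrow> bool" where
  "eigen_on D A r x \<longleftrightarrow> (\<forall>v\<in>D. mvmult D A x v = r * x v)"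

definition prob_vec :: "'a set \<Rightarrow> ('a \<Rightarrow> real) \<Rightarrow> bool" where
  "prob_vec D x \<longleftrightarrow> (\<forall>v\<in>D. 0 \<le> x v) \<and> sum x D = 1"

definition pos_subinvariant :: "'a set \<Rightarrow> 'a vmat \<Rightarrow> real \<Rightarrow> ('a \<Rightarrow> real) \<Rightarrow> bool" where
  "pos_subinvariant D A l u \<longleftrightarrow> (\<forall>v\<in>D. 0 < u v) \<and> (\<forall>v\<in>D. mvmult D A u v \<le> l * u v)"

lemma mvmult_cong: "(\<And>w. w \<in> D \<Longrightarrow> x w = y w) \<Longrightarrow> mvmult D M x v = mvmult D M y v"
  unfolding mvmult_def by (intro sum.cong) auto

lemma mvmult_scale: "mvmult D M (\<lambda>w. c * x w) v = c * mvmult D M x v"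
  unfolding mvmult_def by (simp add: sum_distrib_left algebra_simps)

lemma mvmult_divide: "mvmult D M (\<lambda>w. x w / c) v = mvmult D M x v / c"
  unfolding mvmult_def by (simp add: sum_divide_distrib)

lemma mvmult_diff: "mvmult D M (\<lambda>w. x w - y w) v = mvmult D M x v - mvmult D M y v"
  unfolding mvmult_def by (simp add: sum_subtractf algebra_simps)

lemma mvmult_nonneg:
  "nonneg_on D A \<Longrightarrow> v \<in> D \<Longrightarrow> (\<And>w. w \<in> D \<Longrightarrow> 0 \<le> x w) \<Longrightarrow> 0 \<le> mvmult D A x v"
  unfolding mvmult_def nonneg_on_def by (intro sum_nonneg mult_nonneg_nonneg) auto

lemma mvmult_mono:
  "nonneg_on D A \<Longrightarrow> v \<in> D \<Longrightarrow> (\<And>w. w \<in> D \<Longrightarrow> x w \<le> y w) \<Longrightarrow> mvmult D A x v \<le> mvmult D A y v"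
  unfolding mvmult_def nonneg_on_def by (intro sum_mono mult_left_mono) auto

lemma mvmult_restrict:
  assumes "finite V" "D \<subseteq> V" "\<And>w. w \<in> V - D \<Longrightarrow> M v w * x w = 0"
  shows "mvmult V M x v = mvmult D M x v"
  unfolding mvmult_def using assms by (intro sum.mono_neutral_right) auto

lemma tendsto_mvmult:
  "(\<And>w. w \<in> D \<Longrightarrow> (\<lambda>n. x n w) \<longlonglongrightarrow> y w) \<Longrightarrow> (\<lambda>n. mvmult D M (x n) v) \<longlonglongrightarrow> mvmult D M y v"
  unfolding mvmult_def by (intro tendsto_sum tendsto_mult tendsto_const) auto

lemma prob_vec_nonzero: "prob_vec D x \<Longrightarrow> \<exists>v\<in>D. x v \<noteq> 0"
  unfolding prob_vec_def by (metis sum.neutral zero_neq_one)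

lemma prob_vec_le_1:
  assumes "finite D" "prob_vec D x" "v \<in> D"
  shows "x v \<le> 1"
proof -
  have "x v \<le> sum x D" using assms by (intro member_le_sum) (auto simp: prob_vec_def)
  then show ?thesis using assms(2) by (simp add: prob_vec_def)
qed

lemma prob_vec_normalise:
  assumes "finite D" "\<forall>v\<in>D. 0 \<le> x v" "0 < sum x D"
  shows "prob_vec D (\<lambda>v. x v / sum x D)"
  unfolding prob_vec_def using assms by (simp add: sum_divide_distrib[symmetric])

lemma eigen_on_normalise: "eigen_on D A r x \<Longrightarrow> eigen_on D A r (\<lambda>v. x v / c)"
  unfolding eigen_on_def mvmult_divide by simp

lemma pos_subinvariant_ge_0:
  assumes A: "nonneg_on D A" and v: "v \<in> D" and u: "pos_subinvariant D A l u"
  shows "0 \<le> l"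
proof -
  have "0 \<le> l * u v"
    using mvmult_nonneg[OF A v, of u] u v unfolding pos_subinvariant_def by (fastforce intro: less_imp_le)
  then show ?thesis using u v unfolding pos_subinvariant_def by (auto simp: zero_le_mult_iff)
qed

lemma eigen_on_scale: "eigen_on D M l x \<Longrightarrow> eigen_on D M l (\<lambda>v. c * x v)"
  unfolding eigen_on_def mvmult_scale by simp

lemma eigen_on_diff: "eigen_on D M l x \<Longrightarrow> eigen_on D M l y \<Longrightarrow> eigen_on D M l (\<lambda>v. x v - y v)"
  unfolding eigen_on_def mvmult_diff by (simp add: algebra_simps)

lemma eigen_on_lincomb:
  assumes "\<forall>C\<in>K. eigen_on D M l (g C)"
  shows "eigen_on D M l (\<lambda>v. \<Sum>C\<in>K. c C * g C v)"
  unfolding eigen_on_def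
proof
  fix v assume v: "v \<in> D"
  have "mvmult D M (\<lambda>w. \<Sum>C\<in>K. c C * g C w) v = (\<Sum>C\<in>K. c C * mvmult D M (g C) v)"
    unfolding mvmult_def sum_distrib_left by (subst sum.swap) (simp add: algebra_simps)
  also have "\<dots> = l * (\<Sum>C\<in>K. c C * g C v)"
    using assms v unfolding eigen_on_def sum_distrib_left by (intro sum.cong) auto
  finally show "mvmult D M (\<lambda>w. \<Sum>C\<in>K. c C * g C w) v = l * (\<Sum>C\<in>K. c C * g C v)" .
qed

text \<open>Compare |y| with u at a coordinate where |y v| / u v is maximal.\<close>

lemma norm_eigval_le_subinvariant:
  assumes fin: "finite D" and A: "nonneg_on D A" and u: "pos_subinvariant D A l u"
    and \<mu>: "\<mu> \<in> eigvals_on D A"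
  shows "cmod \<mu> \<le> l"
proof -
  obtain y where nz: "\<exists>v\<in>D. y v \<noteq> 0"
    and eig: "\<forall>v\<in>D. (\<Sum>w\<in>D. complex_of_real (A v w) * y w) = \<mu> * y v"
    using \<mu> unfolding eigvals_on_def by auto
  have upos: "\<forall>v\<in>D. 0 < u v" and sup: "\<forall>v\<in>D. mvmult D A u v \<le> l * u v"
    using u unfolding pos_subinvariant_def by auto
  define q where "q v = cmod (y v) / u v" for v
  define m where "m = Max (q ` D)"
  obtain v1 where v1: "v1 \<in> D" "y v1 \<noteq> 0" using nz by blast
  obtain v0 where v0: "v0 \<in> D" "q v0 = m"
    using Max_in[of "q ` D"] fin v1(1) unfolding m_def by fastforce
  have "0 < q v1" using v1 upos unfolding q_def by auto
  also have "q v1 \<le> m" unfolding m_def using fin v1 by auto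
  finally have mpos: "0 < m" .
  have bnd: "cmod (y w) \<le> m * u w" if "w \<in> D" for w
    using Max_ge[of "q ` D" "q w"] fin that upos unfolding m_def q_def by (simp add: divide_le_eq)
  have "cmod \<mu> * cmod (y v0) = cmod (\<Sum>w\<in>D. complex_of_real (A v0 w) * y w)"
    using eig v0 by (simp add: norm_mult)
  also have "\<dots> \<le> (\<Sum>w\<in>D. cmod (complex_of_real (A v0 w) * y w))" by (rule norm_sum)
  also have "\<dots> = (\<Sum>w\<in>D. A v0 w * cmod (y w))"
    using A v0 unfolding nonneg_on_def by (intro sum.cong) (auto simp: norm_mult)
  also have "\<dots> \<le> (\<Sum>w\<in>D. A v0 w * (m * u w))"
    using A v0 bnd unfolding nonneg_on_def by (intro sum_mono mult_left_mono) auto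
  also have "\<dots> = m * mvmult D A u v0" unfolding mvmult_def by (simp add: sum_distrib_left algebra_simps)
  also have "\<dots> \<le> m * (l * u v0)" using sup v0 mpos by (intro mult_left_mono) auto
  also have "cmod (y v0) = m * u v0" using v0 upos unfolding q_def by auto
  finally have "cmod \<mu> * (m * u v0) \<le> l * (m * u v0)" by (simp add: algebra_simps)
  then show ?thesis using mpos upos v0 by (simp add: mult_le_cancel_right_pos)
qed

lemma real_eigval_in_eigvals:
  assumes "\<exists>v\<in>D. x v \<noteq> 0" "eigen_on D A r x"
  shows "complex_of_real r \<in> eigvals_on D A"
  unfolding eigvals_on_def
proof (intro CollectI exI[of _ "\<lambda>v. complex_of_real (x v)"] conjI)
  show "\<exists>v\<in>D. complex_of_real (x v) \<noteq> 0" using assms by force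
  show "\<forall>v\<in>D. (\<Sum>w\<in>D. complex_of_real (A v w) * complex_of_real (x w)) = complex_of_real r * complex_of_real (x v)"
    using assms unfolding eigen_on_def mvmult_def by (simp flip: of_real_mult of_real_sum)
qed

lemma eigvec_vanishes_if_subinvariant:
  assumes "finite D" "nonneg_on D A" "pos_subinvariant D A l' u" "l' < l" "eigen_on D A l y"
  shows "\<forall>v\<in>D. y v = 0"
proof (rule ccontr)
  assume "\<not> (\<forall>v\<in>D. y v = 0)"
  then have "complex_of_real l \<in> eigvals_on D A" using assms(5) by (intro real_eigval_in_eigvals) auto
  from norm_eigval_le_subinvariant[OF assms(1-3) this] show False using assms(4) by simp
qed

lemma bdd_above_eigvals:
  assumes "finite D" "nonneg_on D A"
  shows "bdd_above (cmod ` eigvals_on D A)"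
proof -
  have "pos_subinvariant D A (\<Sum>v\<in>D. \<Sum>w\<in>D. A v w) (\<lambda>_. 1)"
    using assms unfolding pos_subinvariant_def mvmult_def nonneg_on_def
    by (auto intro: member_le_sum[of _ D "\<lambda>v. \<Sum>w\<in>D. A v w"] sum_nonneg)
  then show ?thesis by (intro bdd_aboveI2 norm_eigval_le_subinvariant[OF assms])
qed

lemma eigval_le_spec_rad:
  assumes "finite D" "nonneg_on D A" "\<exists>v\<in>D. x v \<noteq> 0" "eigen_on D A r x"
  shows "r \<le> spec_rad D A"
proof -
  have "cmod (complex_of_real r) \<le> spec_rad D A" unfolding spec_rad_def
    by (intro cSup_upper imageI real_eigval_in_eigvals[OF assms(3,4)] bdd_above_eigvals[OF assms(1,2)])
  then show ?thesis by simp
qed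

lemma spec_rad_eq_pos_eigval:
  assumes fin: "finite D" and ne: "D \<noteq> {}" and A: "nonneg_on D A"
    and xpos: "\<forall>v\<in>D. 0 < x v" and eig: "eigen_on D A l x"
  shows "spec_rad D A = l"
  unfolding spec_rad_def
proof (rule cSup_eq_maximum)
  have u: "pos_subinvariant D A l x" using xpos eig unfolding pos_subinvariant_def eigen_on_def by simp
  obtain v where "v \<in> D" using ne by auto
  then have "0 \<le> l" using pos_subinvariant_ge_0[OF A _ u] by blast
  moreover have "complex_of_real l \<in> eigvals_on D A"
    using \<open>v \<in> D\<close> xpos eig by (intro real_eigval_in_eigvals) (auto intro!: bexI[of _ v])
  ultimately show "l \<in> cmod ` eigvals_on D A" by (metis image_eqI norm_of_real abs_of_nonneg)
  show "\<And>m. m \<in> cmod ` eigvals_on D A \<Longrightarrow> m \<le> l" using norm_eigval_le_subinvariant[OF fin A u] by blast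
qed

text \<open>The uniqueness part of Perron--Frobenius, needing only positive off-diagonal entries:
  the minimum of z/x is attained somewhere, and there the equation forces z - c x to vanish.\<close>

lemma nonneg_eigvec_proportional:
  assumes fin: "finite C" and xpos: "\<forall>v\<in>C. 0 < x v" and A: "nonneg_on C A"
    and offpos: "\<forall>v\<in>C. \<forall>w\<in>C. v \<noteq> w \<longrightarrow> 0 < A v w"
    and xeig: "eigen_on C A l x" and znn: "\<forall>v\<in>C. 0 \<le> z v" and zeig: "eigen_on C A l z"
  shows "\<exists>c. \<forall>v\<in>C. z v = c * x v"
proof (cases "C = {}")
  case False
  define c where "c = Min ((\<lambda>v. z v / x v) ` C)"
  obtain v0 where v0: "v0 \<in> C" "z v0 / x v0 = c"
    using Min_in[of "(\<lambda>v. z v / x v) ` C"] fin False unfolding c_def by fastforce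
  define w where "w v = z v - c * x v" for v
  have wnn: "0 \<le> w v" if "v \<in> C" for v
    using Min_le[of "(\<lambda>v. z v / x v) ` C" "z v / x v"] fin that xpos
    unfolding c_def w_def by (simp add: le_divide_eq)
  have w0: "w v0 = 0" using v0 xpos unfolding w_def by auto
  have "mvmult C A w v0 = mvmult C A z v0 - c * mvmult C A x v0"
    unfolding w_def mvmult_diff mvmult_scale ..
  also have "\<dots> = l * w v0" using xeig zeig v0 unfolding w_def eigen_on_def by (simp add: algebra_simps)
  finally have "mvmult C A w v0 = l * w v0" .
  then have "(\<Sum>u\<in>C. A v0 u * w u) = 0" using w0 unfolding mvmult_def by simp
  then have all0: "\<forall>u\<in>C. A v0 u * w u = 0"
    using sum_nonneg_eq_0_iff[OF fin, of "\<lambda>u. A v0 u * w u"] A v0 wnn unfolding nonneg_on_def by auto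
  have "w v = 0" if "v \<in> C" for v
  proof (cases "v = v0")
    case False
    then show ?thesis using all0 offpos v0 that by fastforce
  qed (use w0 in simp)
  then show ?thesis unfolding w_def by (intro exI[of _ c]) auto
qed simp

subsection \<open>Perron's theorem for positive matrices\<close>

lemma bounded_family_convergent_subseq:
  fixes f :: "nat \<Rightarrow> 'a \<Rightarrow> real"
  assumes "finite I" and "\<forall>n. \<forall>i\<in>I. \<bar>f n i\<bar> \<le> M"
  shows "\<exists>h. strict_mono h \<and> (\<forall>i\<in>I. convergent (\<lambda>n. f (h n) i))"
  using assms
proof (induction I rule: finite_induct)
  case empty
  show ?case by (rule exI[of _ id]) (auto simp: strict_mono_def)
next
  case (insert i I)
  then obtain h where h: "strict_mono h" "\<forall>j\<in>I. convergent (\<lambda>n. f (h n) j)" by auto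
  obtain g where g: "strict_mono g" "monoseq (\<lambda>n. f (h (g n)) i)"
    using seq_monosub[of "\<lambda>n. f (h n) i"] by auto
  have "Bseq (\<lambda>n. f (h (g n)) i)"
    using insert.prems by (intro BseqI'[of _ M]) auto
  then have "convergent (\<lambda>n. f (h (g n)) i)" using g Bseq_monoseq_convergent by blast
  moreover have "convergent (\<lambda>n. f (h (g n)) j)" if "j \<in> I" for j
    using convergent_subseq_convergent[OF h(2)[rule_format, OF that] g(1)] by (simp add: o_def)
  moreover have "strict_mono (h \<circ> g)" using h g strict_mono_o by blast
  ultimately show ?case by (intro exI[of _ "h \<circ> g"]) (auto simp: o_def)
qed

lemma tendsto_inverse_Suc_real: "(\<lambda>n. 1 / (real n + 1)) \<longlonglongrightarrow> 0"
  using LIMSEQ_inverse_real_of_nat by (simp add: inverse_eq_divide add.commute)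

lemma tendsto_squeeze_inverse_Suc:
  assumes "\<And>n. s - 1 / (real n + 1) < t n" "\<And>n. t n \<le> s"
  shows "t \<longlonglongrightarrow> s"
proof (rule tendsto_sandwich[of "\<lambda>n. s - 1 / (real n + 1)" _ _ "\<lambda>n. s"])
  show "(\<lambda>n. s - 1 / (real n + 1)) \<longlonglongrightarrow> s"
    using tendsto_diff[OF tendsto_const tendsto_inverse_Suc_real, of s] by simp
qed (use assms in \<open>auto intro: always_eventually less_imp_le\<close>)

text \<open>The Perron root is obtained as the supremum of the Collatz--Wielandt set
  of all t admitting a positive vector x with t x \<le> B x.\<close>

lemma collatz_wielandt_le:
  assumes fin: "finite C" and ne: "C \<noteq> {}" and B: "nonneg_on C B"
    and xpos: "\<forall>v\<in>C. 0 < x v" and t: "\<forall>v\<in>C. t * x v \<le> mvmult C B x v"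
  shows "t \<le> (\<Sum>v\<in>C. \<Sum>w\<in>C. B v w)"
proof -
  obtain v0 where v0: "v0 \<in> C" "x v0 = Max (x ` C)" using Max_in[of "x ` C"] fin ne by fastforce
  have "t * x v0 \<le> mvmult C B x v0" using t v0 by auto
  also have "\<dots> \<le> mvmult C B (\<lambda>_. x v0) v0" using fin v0 B by (intro mvmult_mono) auto
  also have "\<dots> = (\<Sum>w\<in>C. B v0 w) * x v0" unfolding mvmult_def by (simp add: sum_distrib_right)
  also have "\<dots> \<le> (\<Sum>v\<in>C. \<Sum>w\<in>C. B v w) * x v0"
    using fin v0 B xpos unfolding nonneg_on_def
    by (intro mult_right_mono member_le_sum[of v0 C "\<lambda>v. \<Sum>w\<in>C. B v w"]) (auto intro: sum_nonneg less_imp_le)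
  finally show ?thesis using xpos v0(1) by (simp add: mult_le_cancel_right_pos)
qed

lemma normalised_mvmult_ge:
  assumes fin: "finite C" and ne: "C \<noteq> {}" and lo: "\<forall>v\<in>C. \<forall>w\<in>C. b \<le> B v w"
    and hi: "\<forall>v\<in>C. \<forall>w\<in>C. B v w \<le> b'" and b: "0 < b" and xpos: "\<forall>v\<in>C. 0 < x v" and v: "v \<in> C"
  shows "b / (real (card C) * b') \<le> mvmult C B x v / sum (mvmult C B x) C"
proof -
  let ?y = "mvmult C B x"
  have sx: "0 < sum x C" using xpos fin ne by (intro sum_pos) auto
  have ylo: "b * sum x C \<le> ?y u" if "u \<in> C" for u
    unfolding mvmult_def sum_distrib_left using lo that xpos by (intro sum_mono mult_right_mono) (auto intro: less_imp_le)
  have "0 < sum ?y C" using ylo b sx fin ne by (intro sum_pos) (auto intro: mult_pos_pos less_le_trans)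
  moreover have "sum ?y C \<le> real (card C) * b' * sum x C"
  proof -
    have "sum ?y C \<le> (\<Sum>u\<in>C. b' * sum x C)" unfolding mvmult_def sum_distrib_left
      using hi xpos by (intro sum_mono mult_right_mono) (auto intro: less_imp_le)
    then show ?thesis by simp
  qed
  ultimately have "(b * sum x C) / (real (card C) * b' * sum x C) \<le> ?y v / sum ?y C"
    using ylo[OF v] mult_pos_pos[OF b sx] by (intro frac_le) auto
  then show ?thesis using sx by simp
qed

text \<open>Applying B to a Collatz--Wielandt vector keeps it in the Collatz--Wielandt set and pushes
  all its coordinates uniformly away from 0.\<close>

lemma collatz_wielandt_normalise:
  assumes fin: "finite C" and ne: "C \<noteq> {}" and Bpos: "\<forall>v\<in>C. \<forall>w\<in>C. 0 < B v w"
  obtains \<delta> where "0 < \<delta>"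
    and "\<And>x t. \<forall>v\<in>C. 0 < x v \<Longrightarrow> \<forall>v\<in>C. t * x v \<le> mvmult C B x v \<Longrightarrow>
           \<exists>z. (\<forall>v\<in>C. \<delta> \<le> z v) \<and> prob_vec C z \<and> (\<forall>v\<in>C. t * z v \<le> mvmult C B z v)"
proof -
  define entries where "entries = (\<lambda>(v, w). B v w) ` (C \<times> C)"
  have fin_e: "finite entries" and ne_e: "entries \<noteq> {}" using fin ne unfolding entries_def by auto
  have lo: "\<forall>v\<in>C. \<forall>w\<in>C. Min entries \<le> B v w" and hi: "\<forall>v\<in>C. \<forall>w\<in>C. B v w \<le> Max entries"
    using fin_e unfolding entries_def by (auto intro!: Min_le Max_ge)
  have pos: "0 < Min entries" using Min_in[OF fin_e ne_e] Bpos unfolding entries_def by fastforce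
  have "0 < Max entries" using pos Max_ge[OF fin_e] Min_in[OF fin_e ne_e] by fastforce
  show thesis
  proof
    show "0 < Min entries / (real (card C) * Max entries)"
      using pos \<open>0 < Max entries\<close> fin ne by (simp add: card_gt_0_iff)
    fix x t assume xpos: "\<forall>v\<in>C. 0 < x v" and t: "\<forall>v\<in>C. t * x v \<le> mvmult C B x v"
    let ?y = "mvmult C B x"
    define z where "z v = ?y v / sum ?y C" for v
    have ypos: "0 < ?y v" if "v \<in> C" for v
      unfolding mvmult_def using Bpos xpos that fin ne by (intro sum_pos) auto
    then have "prob_vec C z" unfolding z_def using fin ne by (intro prob_vec_normalise sum_pos) (auto intro: less_imp_le)
    moreover have "Min entries / (real (card C) * Max entries) \<le> z v" if "v \<in> C" for v
      unfolding z_def using normalised_mvmult_ge[OF fin ne lo hi pos xpos that] .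
    moreover have "t * z v \<le> mvmult C B z v" if "v \<in> C" for v
    proof -
      have "t * ?y v = mvmult C B (\<lambda>w. t * x w) v" unfolding mvmult_scale ..
      also have "\<dots> \<le> mvmult C B ?y v"
        using Bpos that t by (intro mvmult_mono) (auto simp: nonneg_on_def less_imp_le)
      finally show ?thesis using ypos fin ne unfolding z_def mvmult_divide
        by (simp add: divide_right_mono sum_pos less_imp_le)
    qed
    ultimately show "\<exists>z. (\<forall>v\<in>C. Min entries / (real (card C) * Max entries) \<le> z v) \<and> prob_vec C z \<and>
        (\<forall>v\<in>C. t * z v \<le> mvmult C B z v)" by blast
  qed
qed

lemma collatz_wielandt_limit:
  assumes fin: "finite C" and tt: "tt \<longlonglongrightarrow> s" and lo: "\<forall>n. \<forall>v\<in>C. \<delta> \<le> zz n v"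
    and prob: "\<forall>n. prob_vec C (zz n)" and ineq: "\<forall>n. \<forall>v\<in>C. tt n * zz n v \<le> mvmult C B (zz n) v"
  shows "\<exists>z. (\<forall>v\<in>C. \<delta> \<le> z v) \<and> prob_vec C z \<and> (\<forall>v\<in>C. s * z v \<le> mvmult C B z v)"
proof -
  have "\<forall>n. \<forall>v\<in>C. \<bar>zz n v\<bar> \<le> 1"
    using prob prob_vec_le_1[OF fin] unfolding prob_vec_def by (metis abs_of_nonneg)
  from bounded_family_convergent_subseq[OF fin this]
  obtain h where h: "strict_mono h" "\<forall>v\<in>C. convergent (\<lambda>n. zz (h n) v)" by blast
  define z where "z v = lim (\<lambda>n. zz (h n) v)" for v
  have zlim: "(\<lambda>n. zz (h n) v) \<longlonglongrightarrow> z v" if "v \<in> C" for v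
    using h(2) that unfolding z_def by (simp add: convergent_LIMSEQ_iff)
  have "(\<lambda>n. tt (h n)) \<longlonglongrightarrow> s" using LIMSEQ_subseq_LIMSEQ[OF tt h(1)] by (simp add: o_def)
  then have "s * z v \<le> mvmult C B z v" if "v \<in> C" for v
    using that ineq by (intro LIMSEQ_le[OF tendsto_mult[OF _ zlim] tendsto_mvmult[OF zlim]]) auto
  moreover have "\<delta> \<le> z v" if "v \<in> C" for v using zlim[OF that] lo that by (intro LIMSEQ_le_const) auto
  moreover have "prob_vec C z"
  proof -
    have "(\<lambda>n. sum (zz (h n)) C) \<longlonglongrightarrow> sum z C" by (intro tendsto_sum zlim)
    then have "sum z C = 1" using prob unfolding prob_vec_def by (simp add: LIMSEQ_const_iff)
    moreover have "0 \<le> z v" if "v \<in> C" for v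
      using zlim[OF that] prob that unfolding prob_vec_def by (intro LIMSEQ_le_const) auto
    ultimately show ?thesis unfolding prob_vec_def by auto
  qed
  ultimately show ?thesis by blast
qed

text \<open>If t z \<le> B z with strict inequality somewhere, then B z witnesses a larger
  element of the Collatz--Wielandt set.\<close>

lemma collatz_wielandt_strict:
  assumes fin: "finite C" and ne: "C \<noteq> {}" and Bpos: "\<forall>v\<in>C. \<forall>w\<in>C. 0 < B v w"
    and zpos: "\<forall>v\<in>C. 0 < z v" and ineq: "\<forall>v\<in>C. s * z v \<le> mvmult C B z v"
    and v1: "v1 \<in> C" "s * z v1 < mvmult C B z v1"
  shows "\<exists>\<epsilon> q. 0 < \<epsilon> \<and> (\<forall>v\<in>C. 0 < q v) \<and> (\<forall>v\<in>C. (s + \<epsilon>) * q v \<le> mvmult C B q v)"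
proof -
  have B: "nonneg_on C B" using Bpos unfolding nonneg_on_def by (auto intro: less_imp_le)
  define q where "q = mvmult C B z"
  have qpos: "0 < q v" if "v \<in> C" for v
    unfolding q_def mvmult_def using that Bpos zpos fin ne by (intro sum_pos) auto
  have gap: "0 < mvmult C B q v - s * q v" if v: "v \<in> C" for v
  proof -
    have nn: "0 \<le> B v w * (q w - s * z w)" if "w \<in> C" for w
      using Bpos v that ineq unfolding q_def by (intro mult_nonneg_nonneg) (auto intro: less_imp_le)
    have "0 < B v v1 * (q v1 - s * z v1)" using Bpos v v1 unfolding q_def by auto
    also have "\<dots> \<le> (\<Sum>w\<in>C. B v w * (q w - s * z w))"
      using fin v1 nn by (intro member_le_sum[of v1 C "\<lambda>w. B v w * (q w - s * z w)"]) auto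
    also have "\<dots> = mvmult C B q v - s * q v"
      unfolding q_def mvmult_def by (simp add: algebra_simps sum_subtractf sum_distrib_left)
    finally show ?thesis .
  qed
  define \<epsilon> where "\<epsilon> = Min ((\<lambda>v. (mvmult C B q v - s * q v) / q v) ` C)"
  have "0 < \<epsilon>" unfolding \<epsilon>_def using fin ne gap qpos by auto
  moreover have "(s + \<epsilon>) * q v \<le> mvmult C B q v" if "v \<in> C" for v
  proof -
    have "\<epsilon> \<le> (mvmult C B q v - s * q v) / q v" unfolding \<epsilon>_def using fin that by auto
    then show ?thesis using qpos[OF that] by (simp add: le_divide_eq algebra_simps)
  qed
  ultimately show ?thesis using qpos by blast
qed

lemma perron_positive:
  assumes fin: "finite C" and ne: "C \<noteq> {}" and Bpos: "\<forall>v\<in>C. \<forall>w\<in>C. 0 < B v w"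
  shows "\<exists>x s. (\<forall>v\<in>C. 0 < x v) \<and> prob_vec C x \<and> eigen_on C B s x"
proof -
  have B: "nonneg_on C B" using Bpos unfolding nonneg_on_def by (auto intro: less_imp_le)
  define T where "T = {t. \<exists>x. (\<forall>v\<in>C. 0 < x v) \<and> (\<forall>v\<in>C. t * x v \<le> mvmult C B x v)}"
  have "0 \<in> T" unfolding T_def using mvmult_nonneg[OF B] by (intro CollectI exI[of _ "\<lambda>_. 1"]) auto
  moreover have bdd: "bdd_above T"
    using collatz_wielandt_le[OF fin ne B] unfolding T_def by (intro bdd_aboveI) blast
  ultimately have T_ne: "T \<noteq> {}" by blast
  define s where "s = Sup T"
  have le_s: "t \<le> s" if "t \<in> T" for t unfolding s_def using cSup_upper[OF that bdd] .
  obtain \<delta> where \<delta>: "0 < \<delta>" and normalise: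
    "\<And>x t. \<forall>v\<in>C. 0 < x v \<Longrightarrow> \<forall>v\<in>C. t * x v \<le> mvmult C B x v \<Longrightarrow>
       \<exists>z. (\<forall>v\<in>C. \<delta> \<le> z v) \<and> prob_vec C z \<and> (\<forall>v\<in>C. t * z v \<le> mvmult C B z v)"
    using collatz_wielandt_normalise[OF fin ne Bpos] by blast
  have "\<exists>t z. s - 1 / (real n + 1) < t \<and> t \<le> s \<and> (\<forall>v\<in>C. \<delta> \<le> z v) \<and> prob_vec C z \<and>
      (\<forall>v\<in>C. t * z v \<le> mvmult C B z v)" for n
  proof -
    obtain t where t: "t \<in> T" "s - 1 / (real n + 1) < t"
      using less_cSupE[OF _ T_ne, of "s - 1 / (real n + 1)"] unfolding s_def by auto
    then show ?thesis using normalise le_s unfolding T_def by blast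
  qed
  then obtain tt zz where tt: "\<And>n. s - 1 / (real n + 1) < tt n" "\<And>n. tt n \<le> s"
    and zz: "\<forall>n. \<forall>v\<in>C. \<delta> \<le> zz n v" "\<forall>n. prob_vec C (zz n)"
      "\<forall>n. \<forall>v\<in>C. tt n * zz n v \<le> mvmult C B (zz n) v"
    by metis
  obtain z where z: "\<forall>v\<in>C. \<delta> \<le> z v" "prob_vec C z" "\<forall>v\<in>C. s * z v \<le> mvmult C B z v"
    using collatz_wielandt_limit[OF fin tendsto_squeeze_inverse_Suc[OF tt] zz] by blast
  have zpos: "\<forall>v\<in>C. 0 < z v" using z(1) \<delta> by (meson less_le_trans)
  show ?thesis
  proof (cases "eigen_on C B s z")
    case False
    then obtain v1 where "v1 \<in> C" "s * z v1 < mvmult C B z v1"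
      using z(3) unfolding eigen_on_def by (metis order_neq_le_trans)
    then obtain \<epsilon> q where "0 < \<epsilon>" "s + \<epsilon> \<in> T"
      using collatz_wielandt_strict[OF fin ne Bpos zpos z(3)] unfolding T_def by blast
    then show ?thesis using le_s by fastforce
  qed (use zpos z(2) in blast)
qed

lemma eigvec_limit:
  assumes fin: "finite D" and lim: "\<forall>v\<in>D. \<forall>w\<in>D. (\<lambda>n. B n v w) \<longlonglongrightarrow> A v w"
    and prob: "\<forall>n. prob_vec D (x n)" and eig: "\<forall>n. eigen_on D (B n) (s n) (x n)"
    and bnd: "\<forall>n. \<bar>s n\<bar> \<le> M"
  shows "\<exists>h y r. strict_mono h \<and> (\<lambda>n. s (h n)) \<longlonglongrightarrow> r \<and> prob_vec D y \<and> eigen_on D A r y"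
proof -
  obtain g where g: "strict_mono g" "monoseq (\<lambda>n. s (g n))" using seq_monosub[of s] by auto
  have "Bseq (\<lambda>n. s (g n))" using bnd by (intro BseqI'[of _ M]) auto
  then have "convergent (\<lambda>n. s (g n))" using g Bseq_monoseq_convergent by blast
  have "\<forall>n. \<forall>v\<in>D. \<bar>x (g n) v\<bar> \<le> 1"
    using prob prob_vec_le_1[OF fin] unfolding prob_vec_def by (metis abs_of_nonneg)
  from bounded_family_convergent_subseq[OF fin this]
  obtain h where h: "strict_mono h" "\<forall>v\<in>D. convergent (\<lambda>n. x (g (h n)) v)" by blast
  define H where "H = g \<circ> h"
  have H: "strict_mono H" unfolding H_def using g h strict_mono_o by blast
  obtain r where r: "(\<lambda>n. s (H n)) \<longlonglongrightarrow> r"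
    using convergent_subseq_convergent[OF \<open>convergent (\<lambda>n. s (g n))\<close> h(1)]
    unfolding H_def convergent_def by (auto simp: o_def)
  define y where "y v = lim (\<lambda>n. x (H n) v)" for v
  have ylim: "(\<lambda>n. x (H n) v) \<longlonglongrightarrow> y v" if "v \<in> D" for v
    using h(2) that unfolding y_def H_def by (simp add: convergent_LIMSEQ_iff o_def)
  have "prob_vec D y"
  proof -
    have "(\<lambda>n. sum (x (H n)) D) \<longlonglongrightarrow> sum y D" by (intro tendsto_sum ylim)
    then have "sum y D = 1" using prob unfolding prob_vec_def by (simp add: LIMSEQ_const_iff)
    moreover have "0 \<le> y v" if "v \<in> D" for v
      using ylim[OF that] prob that unfolding prob_vec_def by (intro LIMSEQ_le_const) auto
    ultimately show ?thesis unfolding prob_vec_def by auto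
  qed
  moreover have "eigen_on D A r y" unfolding eigen_on_def
  proof
    fix v assume v: "v \<in> D"
    have "(\<lambda>n. mvmult D (B (H n)) (x (H n)) v) \<longlonglongrightarrow> mvmult D A y v"
      unfolding mvmult_def using lim v
      by (intro tendsto_sum tendsto_mult ylim LIMSEQ_subseq_LIMSEQ[OF _ H, unfolded o_def]) auto
    moreover have "(\<lambda>n. mvmult D (B (H n)) (x (H n)) v) \<longlonglongrightarrow> r * y v"
      using eig v tendsto_mult[OF r ylim[OF v]] unfolding eigen_on_def by simp
    ultimately show "mvmult D A y v = r * y v" using LIMSEQ_unique by blast
  qed
  ultimately show ?thesis using H r by blast
qed

text \<open>Perturbing A to the positive matrices A + 1/(n+1) and passing to the limit.\<close>

lemma subinvariant_or_eigvec:
  assumes fin: "finite D" and ne: "D \<noteq> {}" and A: "nonneg_on D A"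
  shows "(\<exists>u l'. l' < l \<and> pos_subinvariant D A l' u) \<or> (\<exists>x r. l \<le> r \<and> prob_vec D x \<and> eigen_on D A r x)"
proof (cases "\<exists>u l'. l' < l \<and> pos_subinvariant D A l' u")
  case no_sub: False
  define B where "B n v w = A v w + 1 / (real n + 1)" for n :: nat and v w
  have Bpos: "\<forall>v\<in>D. \<forall>w\<in>D. 0 < B n v w" for n unfolding B_def using A
    unfolding nonneg_on_def by (auto intro: add_nonneg_pos)
  obtain x s where x: "\<And>n. \<forall>v\<in>D. 0 < x n v" "\<And>n. prob_vec D (x n)" "\<And>n. eigen_on D (B n) (s n) (x n)"
    using perron_positive[OF fin ne Bpos] by metis
  have "pos_subinvariant D A (s n) (x n)" for n
  proof -
    have "mvmult D A (x n) v \<le> s n * x n v" if "v \<in> D" for v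
    proof -
      have "mvmult D A (x n) v \<le> mvmult D (B n) (x n) v"
        unfolding mvmult_def B_def using x(1) by (intro sum_mono mult_right_mono) (auto intro: less_imp_le)
      then show ?thesis using x(3) that unfolding eigen_on_def by simp
    qed
    then show ?thesis using x(1) unfolding pos_subinvariant_def by blast
  qed
  then have "l \<le> s n" for n using no_sub by (meson not_le)
  moreover have "s n \<le> (\<Sum>v\<in>D. \<Sum>w\<in>D. A v w + 1)" for n
  proof -
    have "nonneg_on D (B n)" using Bpos[of n] unfolding nonneg_on_def by (auto intro: less_imp_le)
    then have "s n \<le> (\<Sum>v\<in>D. \<Sum>w\<in>D. B n v w)"
      using x(3)[of n] unfolding eigen_on_def by (intro collatz_wielandt_le[OF fin ne _ x(1)[of n]]) auto
    also have "\<dots> \<le> (\<Sum>v\<in>D. \<Sum>w\<in>D. A v w + 1)"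
      unfolding B_def by (intro sum_mono) (simp add: divide_le_eq)
    finally show ?thesis .
  qed
  ultimately have bnd: "\<forall>n. \<bar>s n\<bar> \<le> \<bar>l\<bar> + \<bar>\<Sum>v\<in>D. \<Sum>w\<in>D. A v w + 1\<bar>" by (smt (verit))
  have "\<forall>v\<in>D. \<forall>w\<in>D. (\<lambda>n. B n v w) \<longlonglongrightarrow> A v w"
    unfolding B_def using tendsto_add[OF tendsto_const tendsto_inverse_Suc_real] by simp
  then obtain h y r where "strict_mono h" "(\<lambda>n. s (h n)) \<longlonglongrightarrow> r" "prob_vec D y" "eigen_on D A r y"
    using eigvec_limit[OF fin _ _ _ bnd] x by blast
  moreover from this(2) have "l \<le> r" using \<open>\<And>n. l \<le> s n\<close> by (intro LIMSEQ_le_const) auto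
  ultimately show ?thesis by blast
qed blast

lemma exists_nonneg_eigvec:
  assumes fin: "finite D" and ne: "D \<noteq> {}" and A: "nonneg_on D A"
  shows "\<exists>x r. prob_vec D x \<and> eigen_on D A r x"
proof -
  obtain v where "v \<in> D" using ne by auto
  then show ?thesis
    using subinvariant_or_eigvec[OF fin ne A, of 0] pos_subinvariant_ge_0[OF A] by (meson not_le)
qed

lemma spec_rad_le_subinvariant:
  assumes fin: "finite D" and ne: "D \<noteq> {}" and A: "nonneg_on D A" and u: "pos_subinvariant D A l u"
  shows "spec_rad D A \<le> l"
proof -
  obtain x r where "prob_vec D x" "eigen_on D A r x" using exists_nonneg_eigvec[OF fin ne A] by blast
  then have "complex_of_real r \<in> eigvals_on D A" by (intro real_eigval_in_eigvals prob_vec_nonzero)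
  then have "cmod ` eigvals_on D A \<noteq> {}" by blast
  moreover have "cmod \<mu> \<le> l" if "\<mu> \<in> eigvals_on D A" for \<mu>
    using norm_eigval_le_subinvariant[OF fin A u that] .
  ultimately show ?thesis unfolding spec_rad_def by (intro cSup_least) auto
qed

lemma exists_dominating_multiple:
  fixes c w :: "'a \<Rightarrow> real"
  assumes "finite D" "\<forall>v\<in>D. 0 < w v"
  shows "\<exists>K\<ge>0. \<forall>v\<in>D. c v \<le> K * w v"
proof -
  define K where "K = Max (insert 0 ((\<lambda>v. c v / w v) ` D))"
  have "c v \<le> K * w v" if "v \<in> D" for v
  proof -
    have "c v / w v \<le> K" unfolding K_def using assms(1) that by simp
    then show ?thesis using assms(2) that by (simp add: divide_le_eq)
  qed
  moreover have "0 \<le> K" unfolding K_def using assms(1) by simp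
  ultimately show ?thesis by blast
qed

text \<open>The solution of the resolvent equation (l - A) y = c is the monotone limit of these iterates,
  bounded by a multiple of the subinvariant vector.\<close>

primrec resolvent_iter :: "'a set \<Rightarrow> 'a vmat \<Rightarrow> ('a \<Rightarrow> real) \<Rightarrow> real \<Rightarrow> nat \<Rightarrow> 'a \<Rightarrow> real" where
  "resolvent_iter D A c l 0 = (\<lambda>v. 0)"
| "resolvent_iter D A c l (Suc n) = (\<lambda>v. (mvmult D A (resolvent_iter D A c l n) v + c v) / l)"

lemma resolvent_iter_nonneg:
  assumes "nonneg_on D A" "0 < l" "\<forall>v\<in>D. 0 \<le> c v" "v \<in> D"
  shows "0 \<le> resolvent_iter D A c l n v"
  using assms(4)
proof (induction n arbitrary: v)
  case (Suc n)
  then show ?case using assms(1-3) by (auto intro!: divide_nonneg_pos add_nonneg_nonneg mvmult_nonneg)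
qed simp

lemma resolvent_iter_mono:
  assumes "nonneg_on D A" "0 < l" "\<forall>v\<in>D. 0 \<le> c v" "v \<in> D"
  shows "resolvent_iter D A c l n v \<le> resolvent_iter D A c l (Suc n) v"
  using assms(4)
proof (induction n arbitrary: v)
  case 0
  then show ?case using resolvent_iter_nonneg[OF assms(1-3)] by (metis resolvent_iter.simps(1))
next
  case (Suc n)
  then show ?case using assms(1,2) by (simp add: divide_right_mono mvmult_mono)
qed

lemma resolvent_iter_bounded:
  assumes A: "nonneg_on D A" and l: "0 < l" and u: "pos_subinvariant D A l' u" and K: "0 \<le> K"
    and c: "\<forall>v\<in>D. c v \<le> K * ((l - l') * u v)" and v: "v \<in> D"
  shows "resolvent_iter D A c l n v \<le> K * u v"
  using v
proof (induction n arbitrary: v)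
  case 0
  then show ?case using K u unfolding pos_subinvariant_def by (simp add: less_imp_le)
next
  case (Suc n)
  have "mvmult D A (resolvent_iter D A c l n) v \<le> mvmult D A (\<lambda>w. K * u w) v"
    using A Suc by (intro mvmult_mono) auto
  also have "\<dots> \<le> K * (l' * u v)"
    using u Suc.prems K unfolding mvmult_scale pos_subinvariant_def by (intro mult_left_mono) auto
  finally have "mvmult D A (resolvent_iter D A c l n) v + c v \<le> l * (K * u v)"
    using c Suc.prems by (simp add: algebra_simps) (smt (verit))
  then show ?case using l by (simp add: divide_le_eq mult.commute)
qed

lemma nonneg_resolvent_solution:
  assumes fin: "finite D" and A: "nonneg_on D A" and u: "pos_subinvariant D A l' u"
    and ll: "l' < l" and c: "\<forall>v\<in>D. 0 \<le> c v"
  shows "\<exists>y. (\<forall>v\<in>D. 0 \<le> y v) \<and> (\<forall>v\<in>D. l * y v = mvmult D A y v + c v)"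
proof (cases "D = {}")
  case False
  then obtain v0 where "v0 \<in> D" by auto
  then have l: "0 < l" using pos_subinvariant_ge_0[OF A _ u] ll by fastforce
  obtain K where K: "0 \<le> K" and cK: "\<forall>v\<in>D. c v \<le> K * ((l - l') * u v)"
    using exists_dominating_multiple[OF fin, of "\<lambda>v. (l - l') * u v" c] u ll unfolding pos_subinvariant_def by auto
  let ?Y = "resolvent_iter D A c l"
  define y where "y v = lim (\<lambda>n. ?Y n v)" for v
  have ylim: "(\<lambda>n. ?Y n v) \<longlonglongrightarrow> y v" if v: "v \<in> D" for v
  proof -
    have "incseq (\<lambda>n. ?Y n v)" using resolvent_iter_mono[OF A l c v] by (intro incseq_SucI) auto
    moreover have "bdd_above (range (\<lambda>n. ?Y n v))"
      using resolvent_iter_bounded[OF A l u K cK v] by (intro bdd_aboveI) auto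
    ultimately show ?thesis
      unfolding y_def using LIMSEQ_incseq_SUP convergent_LIMSEQ_iff convergent_def by blast
  qed
  have "0 \<le> y v" if "v \<in> D" for v
    using resolvent_iter_nonneg[OF A l c that] by (intro LIMSEQ_le_const[OF ylim[OF that]]) auto
  moreover have "l * y v = mvmult D A y v + c v" if v: "v \<in> D" for v
  proof -
    have "(\<lambda>n. ?Y (Suc n) v) \<longlonglongrightarrow> (mvmult D A y v + c v) / l"
      by (simp only: resolvent_iter.simps) (intro tendsto_divide tendsto_add tendsto_mvmult ylim tendsto_const, use l in auto)
    then have "y v = (mvmult D A y v + c v) / l" using LIMSEQ_unique LIMSEQ_Suc[OF ylim[OF v]] by blast
    then show ?thesis using l by (simp add: field_simps)
  qed
  ultimately show ?thesis by blast
qed simp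

lemma mvmult_mmult: "mvmult V (mmult V M N) x v = mvmult V M (mvmult V N x) v"
  unfolding mvmult_def mmult_def
  by (simp add: sum_distrib_right sum_distrib_left algebra_simps) (rule sum.swap)

lemma mvmult_mone: "finite V \<Longrightarrow> v \<in> V \<Longrightarrow> mvmult V mone x v = x v"
  unfolding mvmult_def mone_def by (simp add: if_distrib if_distribR sum.delta cong: if_cong)

lemma mvmult_sum_list_mat: "mvmult V (\<lambda>v w. \<Sum>a\<leftarrow>L. P a v w) x v = (\<Sum>a\<leftarrow>L. mvmult V (P a) x v)"
  unfolding mvmult_def by (induction L) (auto simp: algebra_simps sum.distrib)

lemma mvmult_sum_list_vec: "mvmult V M (\<lambda>u. \<Sum>a\<leftarrow>L. f a u) v = (\<Sum>a\<leftarrow>L. mvmult V M (f a) v)"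
  unfolding mvmult_def by (induction L) (auto simp: algebra_simps sum.distrib)

lemma mmult_nonneg: "(\<And>v w. 0 \<le> M v w) \<Longrightarrow> (\<And>v w. 0 \<le> N v w) \<Longrightarrow> 0 \<le> mmult V M N v w"
  unfolding mmult_def by (intro sum_nonneg mult_nonneg_nonneg) auto

lemma mpow_nonneg: "(\<And>v w. 0 \<le> M v w) \<Longrightarrow> 0 \<le> mpow V M m v w"
  by (induction m arbitrary: v w) (auto intro: mmult_nonneg simp: mone_def)

lemma foldl_mmult_nonneg:
  "(\<And>v w. 0 \<le> M0 v w) \<Longrightarrow> (\<And>i v w. 0 \<le> P i v w) \<Longrightarrow> 0 \<le> foldl (\<lambda>M i. mmult V M (P i)) M0 is v w"
proof (induction "is" arbitrary: M0)
  case (Cons i "is")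
  have "\<And>v w. 0 \<le> mmult V M0 (P i) v w" using Cons.prems by (intro mmult_nonneg)
  then show ?case using Cons.IH Cons.prems(2) by simp
qed simp

lemma eigen_on_mpow:
  assumes "finite V" "eigen_on V M c x"
  shows "eigen_on V (mpow V M m) (c ^ m) x"
  unfolding eigen_on_def
proof (induction m)
  case 0
  then show ?case using assms(1) by (simp add: mvmult_mone)
next
  case (Suc m)
  show ?case
  proof
    fix v assume v: "v \<in> V"
    have "mvmult V (mpow V M (Suc m)) x v = mvmult V (mpow V M m) (\<lambda>w. c * x w) v"
      using assms(2) unfolding mpow.simps mvmult_mmult eigen_on_def by (intro mvmult_cong) auto
    also have "\<dots> = c ^ Suc m * x v" using Suc v by (simp add: mvmult_scale)
    finally show "mvmult V (mpow V M (Suc m)) x v = c ^ Suc m * x v" .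
  qed
qed

lemma mvmult_foldl_mmult_eigen:
  assumes "\<forall>i\<in>set is. eigen_on V (P i) (c i) x" "v \<in> V"
  shows "mvmult V (foldl (\<lambda>M i. mmult V M (P i)) M0 is) x v = (\<Prod>i\<leftarrow>is. c i) * mvmult V M0 x v"
  using assms
proof (induction "is" arbitrary: M0)
  case (Cons i "is")
  have "mvmult V (mmult V M0 (P i)) x v = c i * mvmult V M0 x v"
    using Cons.prems unfolding mvmult_mmult eigen_on_def by (simp add: mvmult_scale cong: mvmult_cong)
  then show ?case using Cons by simp
qed simp

definition commute_on :: "'a set \<Rightarrow> 'a vmat \<Rightarrow> 'a vmat \<Rightarrow> bool" where
  "commute_on V M N \<longleftrightarrow> (\<forall>x. \<forall>v\<in>V. mvmult V M (mvmult V N x) v = mvmult V N (mvmult V M x) v)"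

lemma eigen_on_commute:
  assumes "commute_on V M A" "eigen_on V A l x"
  shows "eigen_on V A l (mvmult V M x)"
  unfolding eigen_on_def
proof
  fix v assume v: "v \<in> V"
  have "mvmult V A (mvmult V M x) v = mvmult V M (mvmult V A x) v"
    using assms(1) v unfolding commute_on_def by auto
  also have "\<dots> = l * mvmult V M x v"
    using assms(2) unfolding eigen_on_def mvmult_scale[symmetric] by (intro mvmult_cong) auto
  finally show "mvmult V A (mvmult V M x) v = l * mvmult V M x v" .
qed

lemma commute_on_mone: "finite V \<Longrightarrow> commute_on V X mone"
  unfolding commute_on_def by (simp add: mvmult_mone cong: mvmult_cong)

lemma commute_on_mmult: "commute_on V X M \<Longrightarrow> commute_on V X N \<Longrightarrow> commute_on V X (mmult V M N)"
  unfolding commute_on_def mvmult_mmult by (simp cong: mvmult_cong)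

lemma commute_on_mpow: "finite V \<Longrightarrow> commute_on V X M \<Longrightarrow> commute_on V X (mpow V M m)"
  by (induction m) (auto intro: commute_on_mmult commute_on_mone)

lemma commute_on_foldl_mmult:
  "commute_on V X M0 \<Longrightarrow> \<forall>i\<in>set is. commute_on V X (P i) \<Longrightarrow>
   commute_on V X (foldl (\<lambda>M i. mmult V M (P i)) M0 is)"
  by (induction "is" arbitrary: M0) (auto intro: commute_on_mmult)

lemma commute_on_sum_list:
  assumes "\<forall>a\<in>set L. commute_on V X (P a)"
  shows "commute_on V X (\<lambda>v w. \<Sum>a\<leftarrow>L. P a v w)"
  unfolding commute_on_def
proof (intro allI ballI)
  fix x v assume v: "v \<in> V"
  have "mvmult V (\<lambda>v w. \<Sum>a\<leftarrow>L. P a v w) x = (\<lambda>u. \<Sum>a\<leftarrow>L. mvmult V (P a) x u)"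
    by (rule ext) (rule mvmult_sum_list_mat)
  then have "mvmult V X (mvmult V (\<lambda>v w. \<Sum>a\<leftarrow>L. P a v w) x) v = (\<Sum>a\<leftarrow>L. mvmult V X (mvmult V (P a) x) v)"
    by (simp add: mvmult_sum_list_vec)
  also have "\<dots> = (\<Sum>a\<leftarrow>L. mvmult V (P a) (mvmult V X x) v)"
    using assms v unfolding commute_on_def by (intro arg_cong[where f=sum_list] map_cong) auto
  finally show "mvmult V X (mvmult V (\<lambda>v w. \<Sum>a\<leftarrow>L. P a v w) x) v = mvmult V (\<lambda>v w. \<Sum>a\<leftarrow>L. P a v w) (mvmult V X x) v"
    by (simp add: mvmult_sum_list_mat)
qed

lemma commute_on_if_mmult_eq:
  "(\<And>v w. v \<in> V \<Longrightarrow> mmult V M N v w = mmult V N M v w) \<Longrightarrow> commute_on V M N"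
  unfolding commute_on_def mvmult_mmult[symmetric] by (simp add: mvmult_def)

section \<open>Finite k-graphs with a well-chosen sequence\<close>

locale well_chosen_kgraph =
  fixes k :: nat and G :: "'a kgraph" and F :: "(nat \<Rightarrow> nat) list"
  assumes kgraph: "is_kgraph k G" and fin_graph: "finite_kgraph k G" and well_chosen: "well_chosen k G F"
begin

abbreviation "V \<equiv> verts G"
abbreviation "A \<equiv> AF k G F"

lemma k_pos: "0 < k" using kgraph unfolding is_kgraph_def by auto

lemma deg_in_Nk: "p \<in> mor G \<Longrightarrow> deg G p \<in> Nk k" using kgraph unfolding is_kgraph_def by auto

lemma rng_in_verts: "p \<in> mor G \<Longrightarrow> rng G p \<in> V" using kgraph unfolding is_kgraph_def by auto

lemma src_in_verts: "p \<in> mor G \<Longrightarrow> src G p \<in> V" using kgraph unfolding is_kgraph_def by auto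

lemma vert_props: "v \<in> V \<Longrightarrow> v \<in> mor G \<and> deg G v = 0 \<and> rng G v = v \<and> src G v = v"
  using kgraph unfolding is_kgraph_def verts_def by auto

lemma comp_props:
  "\<mu> \<in> mor G \<Longrightarrow> \<nu> \<in> mor G \<Longrightarrow> src G \<mu> = rng G \<nu> \<Longrightarrow>
   comp G \<mu> \<nu> \<in> mor G \<and> rng G (comp G \<mu> \<nu>) = rng G \<mu> \<and> src G (comp G \<mu> \<nu>) = src G \<nu> \<and>
   deg G (comp G \<mu> \<nu>) = deg G \<mu> + deg G \<nu>"
  using kgraph unfolding is_kgraph_def by blast

lemma unique_factorisation:
  "p \<in> mor G \<Longrightarrow> m \<in> Nk k \<Longrightarrow> n \<in> Nk k \<Longrightarrow> deg G p = m + n \<Longrightarrow>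
   \<exists>!q. fst q \<in> mor G \<and> snd q \<in> mor G \<and> deg G (fst q) = m \<and> deg G (snd q) = n \<and>
        src G (fst q) = rng G (snd q) \<and> comp G (fst q) (snd q) = p"
  using kgraph unfolding is_kgraph_def by blast

lemma finite_verts: "finite V"
proof -
  have "0 \<in> Nk k" unfolding Nk_def by simp
  then show ?thesis using fin_graph unfolding finite_kgraph_def verts_def by simp
qed

lemma finite_paths: "finite (paths G n v w)"
proof (cases "n \<in> Nk k")
  case True
  then have "finite {p \<in> mor G. deg G p = n}" using fin_graph unfolding finite_kgraph_def by simp
  then show ?thesis unfolding paths_def by (rule rev_finite_subset) auto
next
  case False
  then have "paths G n v w = {}" unfolding paths_def using deg_in_Nk by auto
  then show ?thesis by simp
qed

text \<open>Unique factorisation makes composition a bijection onto the paths of degree m + n.\<close>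

lemma card_paths_add:
  assumes m: "m \<in> Nk k" and n: "n \<in> Nk k"
  shows "card (paths G (m + n) v w) = (\<Sum>u\<in>V. card (paths G m v u) * card (paths G n u w))"
proof -
  define S where "S = (\<Union>u\<in>V. paths G m v u \<times> paths G n u w)"
  have "card S = (\<Sum>u\<in>V. card (paths G m v u) * card (paths G n u w))"
    unfolding S_def using finite_verts finite_paths
    by (subst card_UN_disjoint) (auto simp: card_cartesian_product paths_def)
  moreover have "inj_on (\<lambda>(\<mu>, \<nu>). comp G \<mu> \<nu>) S"
  proof (rule inj_onI, clarify)
    fix \<mu> \<nu> \<mu>' \<nu>' assume "(\<mu>, \<nu>) \<in> S" "(\<mu>', \<nu>') \<in> S" and eq: "comp G \<mu> \<nu> = comp G \<mu>' \<nu>'"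
    then have h: "\<mu> \<in> mor G" "\<nu> \<in> mor G" "deg G \<mu> = m" "deg G \<nu> = n" "src G \<mu> = rng G \<nu>"
      and h': "\<mu>' \<in> mor G" "\<nu>' \<in> mor G" "deg G \<mu>' = m" "deg G \<nu>' = n" "src G \<mu>' = rng G \<nu>'"
      unfolding S_def paths_def by auto
    have "comp G \<mu> \<nu> \<in> mor G" "deg G (comp G \<mu> \<nu>) = m + n" using comp_props[OF h(1,2,5)] h by auto
    from unique_factorisation[OF this(1) m n this(2)] show "\<mu> = \<mu>' \<and> \<nu> = \<nu>'"
      using h h' eq by (metis fst_conv snd_conv prod.inject)
  qed
  moreover have "(\<lambda>(\<mu>, \<nu>). comp G \<mu> \<nu>) ` S = paths G (m + n) v w"
  proof
    show "(\<lambda>(\<mu>, \<nu>). comp G \<mu> \<nu>) ` S \<subseteq> paths G (m + n) v w"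
      unfolding S_def paths_def using comp_props by fastforce
    show "paths G (m + n) v w \<subseteq> (\<lambda>(\<mu>, \<nu>). comp G \<mu> \<nu>) ` S"
    proof
      fix p assume "p \<in> paths G (m + n) v w"
      then have p: "p \<in> mor G" "deg G p = m + n" "rng G p = v" "src G p = w" unfolding paths_def by auto
      from unique_factorisation[OF p(1) m n p(2)] obtain \<mu> \<nu> where q: "\<mu> \<in> mor G" "\<nu> \<in> mor G"
        "deg G \<mu> = m" "deg G \<nu> = n" "src G \<mu> = rng G \<nu>" "comp G \<mu> \<nu> = p" by auto
      then have "(\<mu>, \<nu>) \<in> S"
        unfolding S_def paths_def using p comp_props[OF q(1,2,5)] src_in_verts[OF q(1)] by auto
      then show "p \<in> (\<lambda>(\<mu>, \<nu>). comp G \<mu> \<nu>) ` S" using q(6) by force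
    qed
  qed
  ultimately show ?thesis using card_image by metis
qed

lemma unitv_in_Nk: "i \<in> {1..k} \<Longrightarrow> unitv i \<in> Nk k" unfolding unitv_def Nk_def by auto

lemma vmatrix_commute:
  assumes "i \<in> {1..k}" "j \<in> {1..k}"
  shows "commute_on V (vmatrix G i) (vmatrix G j)"
proof (rule commute_on_if_mmult_eq)
  have "mmult V (vmatrix G i) (vmatrix G j) v w = real (card (paths G (unitv i + unitv j) v w))"
    if "i \<in> {1..k}" "j \<in> {1..k}" for i j v w
    unfolding mmult_def vmatrix_def using card_paths_add[OF unitv_in_Nk[OF that(1)] unitv_in_Nk[OF that(2)]]
    by (simp flip: of_nat_mult of_nat_sum)
  then show "mmult V (vmatrix G i) (vmatrix G j) v w = mmult V (vmatrix G j) (vmatrix G i) v w" for v w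
    using assms by (simp add: add.commute)
qed

lemma vmatrix_nonneg: "0 \<le> vmatrix G i v w" unfolding vmatrix_def by simp

lemma AF_nonneg: "0 \<le> A v w"
  unfolding AF_def vmatrix_pow_def
  by (intro sum_list_nonneg) (auto intro!: foldl_mmult_nonneg mpow_nonneg vmatrix_nonneg simp: mone_def)

lemma nonneg_on_AF: "nonneg_on S A" unfolding nonneg_on_def using AF_nonneg by auto

lemma nonneg_on_vmatrix: "nonneg_on S (vmatrix G i)" unfolding nonneg_on_def using vmatrix_nonneg by auto

lemma vmatrix_commute_AF:
  assumes "i \<in> {1..k}"
  shows "commute_on V (vmatrix G i) A"
proof -
  have "commute_on V (vmatrix G i) (vmatrix_pow k G a)" for a
    unfolding vmatrix_pow_def using assms
    by (intro commute_on_foldl_mmult commute_on_mone finite_verts ballI commute_on_mpow) (auto intro: vmatrix_commute)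
  then show ?thesis unfolding AF_def by (intro commute_on_sum_list) auto
qed

lemma eigen_on_vmatrix_pow:
  assumes "\<forall>i\<in>{1..k}. eigen_on V (vmatrix G i) (c i) x"
  shows "eigen_on V (vmatrix_pow k G a) (\<Prod>i\<leftarrow>[1..<Suc k]. c i ^ a i) x"
proof -
  have "\<forall>i\<in>set [1..<Suc k]. eigen_on V (mpow V (vmatrix G i) (a i)) (c i ^ a i) x"
    using assms by (auto intro: eigen_on_mpow finite_verts)
  from mvmult_foldl_mmult_eigen[OF this] show ?thesis
    unfolding eigen_on_def vmatrix_pow_def by (simp add: mvmult_mone finite_verts)
qed

lemma eigen_on_AF:
  assumes "\<forall>i\<in>{1..k}. eigen_on V (vmatrix G i) (c i) x"
  shows "eigen_on V A (\<Sum>a\<leftarrow>F. \<Prod>i\<leftarrow>[1..<Suc k]. c i ^ a i) x"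
proof -
  have "mvmult V A x v = (\<Sum>a\<leftarrow>F. (\<Prod>i\<leftarrow>[1..<Suc k]. c i ^ a i) * x v)" if "v \<in> V" for v
    unfolding AF_def mvmult_sum_list_mat using eigen_on_vmatrix_pow[OF assms] that unfolding eigen_on_def
    by (intro arg_cong[where f=sum_list] map_cong) auto
  then show ?thesis unfolding eigen_on_def by (simp add: sum_list_mult_const)
qed

lemma vle_refl: "v \<in> V \<Longrightarrow> vle G v v" unfolding vle_def using vert_props by blast

lemma vle_trans: "vle G a b \<Longrightarrow> vle G b c \<Longrightarrow> vle G a c"
  unfolding vle_def using comp_props by metis

lemma vle_in_verts: "vle G a b \<Longrightarrow> a \<in> V \<and> b \<in> V"
  unfolding vle_def using rng_in_verts src_in_verts by blast

lemma paths_imp_vle: "paths G l a b \<noteq> {} \<Longrightarrow> vle G a b" unfolding paths_def vle_def by blast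

lemma vle_imp_nonzero_path:
  assumes "vle G a b" "a \<noteq> b"
  shows "\<exists>l\<in>Nk k. l \<noteq> 0 \<and> paths G l a b \<noteq> {}"
proof -
  obtain p where p: "p \<in> mor G" "rng G p = a" "src G p = b" using assms(1) unfolding vle_def by blast
  have "deg G p \<noteq> 0"
  proof
    assume "deg G p = 0"
    then have "p \<in> V" using p unfolding verts_def by simp
    then show False using vert_props p assms(2) by metis
  qed
  then show ?thesis using p deg_in_Nk unfolding paths_def by blast
qed

lemma AF_pos_iff: "v \<in> V \<Longrightarrow> w \<in> V \<Longrightarrow> 0 < A v w \<longleftrightarrow> (\<exists>l\<in>Nk k. l \<noteq> 0 \<and> paths G l v w \<noteq> {})"
  using well_chosen unfolding well_chosen_def by blast

lemma vle_imp_AF_pos: "vle G v w \<Longrightarrow> v \<noteq> w \<Longrightarrow> 0 < A v w"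
  using AF_pos_iff vle_imp_nonzero_path vle_in_verts by blast

definition order_supported :: "'a vmat \<Rightarrow> bool" where
  "order_supported M \<longleftrightarrow> (\<forall>v\<in>V. \<forall>w\<in>V. 0 \<le> M v w \<and> (0 < M v w \<longrightarrow> vle G v w))"

lemma order_supported_AF: "order_supported A"
  unfolding order_supported_def using AF_nonneg AF_pos_iff paths_imp_vle by blast

lemma order_supported_vmatrix: "order_supported (vmatrix G i)"
  unfolding order_supported_def vmatrix_def
proof (intro ballI conjI impI)
  fix v w assume "0 < real (card (paths G (unitv i) v w))"
  then have "paths G (unitv i) v w \<noteq> {}" by (metis card.empty of_nat_0 less_irrefl)
  then show "vle G v w" by (rule paths_imp_vle)
qed simp

definition comp_of :: "'a \<Rightarrow> 'a set" where
  "comp_of v = {w\<in>V. vequiv G v w}"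

lemma component_eq_comp_of:
  assumes "C \<in> components G" "a \<in> C"
  shows "C = comp_of a"
proof -
  obtain v where v: "v \<in> V" "C = {w\<in>V. vequiv G v w}" using assms(1) unfolding components_def by auto
  then have "vequiv G v a" using assms(2) by auto
  then show ?thesis unfolding comp_of_def v(2) vequiv_def using vle_trans by blast
qed

lemma comp_of_in_components: "v \<in> V \<Longrightarrow> comp_of v \<in> components G"
  unfolding comp_of_def components_def by auto

lemma mem_comp_of_self: "v \<in> V \<Longrightarrow> v \<in> comp_of v"
  unfolding comp_of_def vequiv_def using vle_refl by auto

lemma component_subset_verts: "C \<in> components G \<Longrightarrow> C \<subseteq> V"
  unfolding components_def by auto

lemma component_nonempty: "C \<in> components G \<Longrightarrow> C \<noteq> {}"
  unfolding components_def using mem_comp_of_self[unfolded comp_of_def] by auto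

lemma finite_component: "C \<in> components G \<Longrightarrow> finite C"
  using component_subset_verts finite_verts finite_subset by blast

lemma finite_components: "finite (components G)"
  using component_subset_verts finite_verts
  by (metis Pow_iff finite_Pow_iff finite_subset subsetI)

lemma component_vequiv: "C \<in> components G \<Longrightarrow> a \<in> C \<Longrightarrow> b \<in> C \<Longrightarrow> vequiv G a b"
  using component_eq_comp_of unfolding comp_of_def by blast

lemma component_closed: "C \<in> components G \<Longrightarrow> a \<in> C \<Longrightarrow> vequiv G a b \<Longrightarrow> b \<in> C"
  using component_eq_comp_of[of C a] vle_in_verts unfolding comp_of_def vequiv_def by blast

lemma AF_pos_in_component: "C \<in> components G \<Longrightarrow> v \<in> C \<Longrightarrow> w \<in> C \<Longrightarrow> v \<noteq> w \<Longrightarrow> 0 < A v w"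
  using component_vequiv vle_imp_AF_pos unfolding vequiv_def by blast

lemma nontrivial_if_AF_pos:
  assumes C: "C \<in> components G" and v: "v \<in> C" and w: "w \<in> C" and pos: "0 < A v w"
  shows "\<not> trivial_comp G C"
proof
  assume "trivial_comp G C"
  then obtain q where q: "between G C C = {q}" unfolding trivial_comp_def by auto
  have vw: "v \<in> V" "w \<in> V" using v w component_subset_verts[OF C] by auto
  obtain l p where l: "l \<noteq> 0" and p: "p \<in> mor G" "deg G p = l" "rng G p = v" "src G p = w"
    using pos AF_pos_iff[OF vw] unfolding paths_def by blast
  have "p \<in> between G C C" "v \<in> between G C C"
    unfolding between_def using p v w vert_props[OF vw(1)] by auto
  then have "p = v" using q by auto
  then show False using p l vert_props[OF vw(1)] by auto
qed

lemma upclosure_subset_verts: "upclosure G C \<subseteq> V" unfolding upclosure_def by auto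

lemma component_subset_upclosure: "C \<in> components G \<Longrightarrow> C \<subseteq> upclosure G C"
  unfolding upclosure_def using component_subset_verts vle_refl by blast

lemma finite_upclosure: "finite (upclosure G C)"
  using upclosure_subset_verts finite_verts finite_subset by blast

lemma upclosure_down_closed: "vle G v w \<Longrightarrow> w \<in> upclosure G C \<Longrightarrow> v \<in> upclosure G C"
  unfolding upclosure_def using vle_trans vle_in_verts by blast

lemma upclosure_vle_in_component:
  assumes "C \<in> components G" "v \<in> C" "w \<in> upclosure G C" "vle G v w"
  shows "w \<in> C"
proof -
  obtain c where c: "c \<in> C" "vle G w c" using assms(3) unfolding upclosure_def by auto
  have "vle G c v" using component_vequiv[OF assms(1) c(1) assms(2)] unfolding vequiv_def by auto
  then have "vle G w v" using c vle_trans by blast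
  then show ?thesis using component_closed[OF assms(1,2)] assms(4) unfolding vequiv_def by blast
qed

text \<open>Every order-supported matrix is block triangular with respect to C, the rest of
  its upclosure, and the complement of the upclosure.\<close>

lemma mvmult_on_component:
  assumes M: "order_supported M" and C: "C \<in> components G" and v: "v \<in> C"
    and x: "\<forall>w. w \<notin> upclosure G C \<longrightarrow> x w = 0"
  shows "mvmult V M x v = mvmult C M x v"
proof (rule mvmult_restrict[OF finite_verts component_subset_verts[OF C]])
  fix w assume w: "w \<in> V - C"
  have vV: "v \<in> V" using v component_subset_verts[OF C] by blast
  show "M v w * x w = 0"
  proof (cases "w \<in> upclosure G C")
    case True
    then have "\<not> 0 < M v w" "0 \<le> M v w"
      using M w vV upclosure_vle_in_component[OF C v] unfolding order_supported_def by auto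
    then show ?thesis by simp
  qed (simp add: x)
qed

lemma mvmult_outside_upclosure:
  assumes M: "order_supported M" and v: "v \<in> V - upclosure G C"
    and x: "\<forall>w. w \<notin> upclosure G C \<longrightarrow> x w = 0"
  shows "mvmult V M x v = 0"
  unfolding mvmult_def
proof (intro sum.neutral ballI)
  fix w assume w: "w \<in> V"
  show "M v w * x w = 0"
  proof (cases "w \<in> upclosure G C")
    case True
    then have "\<not> 0 < M v w" "0 \<le> M v w"
      using M v w upclosure_down_closed[of v w C] unfolding order_supported_def by auto
    then show ?thesis by simp
  qed (simp add: x)
qed

lemma eigen_on_component:
  assumes M: "order_supported M" and C: "C \<in> components G"
    and x: "\<forall>w. w \<notin> upclosure G C \<longrightarrow> x w = 0" and eig: "eigen_on V M r x"
  shows "eigen_on C M r x"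
  unfolding eigen_on_def
proof
  fix v assume v: "v \<in> C"
  then have "v \<in> V" using component_subset_verts[OF C] by blast
  then show "mvmult C M x v = r * x v" using eig mvmult_on_component[OF M C v x] unfolding eigen_on_def by simp
qed

lemma comp_le_trans:
  assumes "comp_le G C D" "comp_le G D E" "D \<in> components G"
  shows "comp_le G C E"
proof -
  obtain a b where ab: "a \<in> C" "b \<in> D" "vle G a b" using assms(1) unfolding comp_le_def by auto
  obtain b' e where be: "b' \<in> D" "e \<in> E" "vle G b' e" using assms(2) unfolding comp_le_def by auto
  have "vle G b b'" using component_vequiv[OF assms(3) ab(2) be(1)] unfolding vequiv_def by auto
  then show ?thesis unfolding comp_le_def using ab be vle_trans by blast
qed

lemma comp_le_upclosure_psubset:
  assumes C: "C \<in> components G" and D: "D \<in> components G" and le: "comp_le G C D" and ne: "C \<noteq> D"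
  shows "upclosure G C \<subset> upclosure G D"
proof -
  obtain a b where ab: "a \<in> C" "b \<in> D" "vle G a b" using le unfolding comp_le_def by auto
  have "upclosure G C \<subseteq> upclosure G D"
    using comp_le_trans[OF _ le C] unfolding upclosure_def comp_le_def by (blast intro: vle_refl)
  moreover have "b \<notin> upclosure G C"
  proof
    assume "b \<in> upclosure G C"
    then have "b \<in> C" using upclosure_vle_in_component[OF C ab(1)] ab(3) by blast
    then show False using component_eq_comp_of[OF C] component_eq_comp_of[OF D] ab ne by metis
  qed
  moreover have "b \<in> upclosure G D" using component_subset_upclosure[OF D] ab by auto
  ultimately show ?thesis by blast
qed

lemma exists_maximal_component:
  assumes fin: "finite K" and ne: "K \<noteq> {}" and sub: "K \<subseteq> components G"
  shows "\<exists>C0\<in>K. \<forall>C\<in>K. comp_le G C0 C \<longrightarrow> C = C0"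
proof -
  define f where "f C = card (upclosure G C)" for C
  have "Max (f ` K) \<in> f ` K" using fin ne by simp
  then obtain C0 where C0: "C0 \<in> K" "f C0 = Max (f ` K)" by (metis imageE)
  have C0_max: "f C \<le> f C0" if "C \<in> K" for C using fin that C0(2) by simp
  have "C = C0" if "C \<in> K" "comp_le G C0 C" for C
  proof (rule ccontr)
    assume "C \<noteq> C0"
    then have "upclosure G C0 \<subset> upclosure G C"
      using comp_le_upclosure_psubset sub C0(1) that by blast
    then have "f C0 < f C" unfolding f_def using finite_upclosure by (simp add: psubset_card_mono)
    then show False using C0_max[OF that(1)] by simp
  qed
  then show ?thesis using C0(1) by blast
qed

text \<open>The definition of xFC also requires vanishing off V, which is implied by vanishing
  off the upclosure.\<close>

definition is_xFC :: "'a set \<Rightarrow> ('a \<Rightarrow> real) \<Rightarrow> bool" where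
  "is_xFC C x \<longleftrightarrow> prob_vec V x \<and> eigen_on V A (spec_rad C A) x \<and> (\<forall>v. v \<notin> upclosure G C \<longrightarrow> x v = 0)"

lemma xFC_eq_The: "xFC k G F C = (THE x. is_xFC C x)"
proof -
  have "(\<lambda>x. (\<forall>v. v \<notin> V \<longrightarrow> x v = 0) \<and> (\<forall>v\<in>V. 0 \<le> x v) \<and> (\<Sum>v\<in>V. x v) = 1 \<and>
      (\<forall>v\<in>V. (\<Sum>w\<in>V. A v w * x w) = spec_rad C A * x v) \<and> (\<forall>v. v \<notin> upclosure G C \<longrightarrow> x v = 0))
    = is_xFC C"
    unfolding is_xFC_def prob_vec_def eigen_on_def mvmult_def using upclosure_subset_verts by blast
  then show ?thesis unfolding xFC_def by simp
qed

lemma mvmult_upclosure_split: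
  assumes C: "C \<in> components G" and x: "\<forall>w. w \<notin> upclosure G C \<longrightarrow> x w = 0"
  shows "mvmult V M x v = mvmult C M x v + mvmult (upclosure G C - C) M x v"
proof -
  have "mvmult V M x v = mvmult (upclosure G C) M x v"
    using x upclosure_subset_verts by (intro mvmult_restrict finite_verts) auto
  also have "\<dots> = mvmult (C \<union> (upclosure G C - C)) M x v"
    using component_subset_upclosure[OF C] by (simp add: Un_absorb1)
  also have "\<dots> = mvmult C M x v + mvmult (upclosure G C - C) M x v"
    unfolding mvmult_def using finite_component[OF C] finite_upclosure by (intro sum.union_disjoint) auto
  finally show ?thesis .
qed

lemma F_harmonic_component: "F_harmonic k G F C \<Longrightarrow> C \<in> components G"
  unfolding F_harmonic_def by simp

lemma F_harmonic_subinvariant: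
  assumes H: "F_harmonic k G F C" and ne: "upclosure G C - C \<noteq> {}"
  shows "\<exists>u l'. l' < spec_rad C A \<and> pos_subinvariant (upclosure G C - C) A l' u"
proof -
  let ?D = "upclosure G C - C"
  have gap: "spec_rad ?D A < spec_rad C A" using H ne unfolding F_harmonic_def by auto
  have fin: "finite ?D" using finite_upclosure by blast
  have "\<not> (spec_rad C A \<le> r \<and> prob_vec ?D x \<and> eigen_on ?D A r x)" for x r
    using eigval_le_spec_rad[OF fin nonneg_on_AF prob_vec_nonzero] gap by fastforce
  then show ?thesis using subinvariant_or_eigvec[OF fin ne nonneg_on_AF, of "spec_rad C A"] by blast
qed

text \<open>Perron's theorem applies to A + I on a component, whose entries are all positive.\<close>

lemma perron_component:
  assumes C: "C \<in> components G"
  shows "\<exists>x. (\<forall>v\<in>C. 0 < x v) \<and> eigen_on C A (spec_rad C A) x"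
proof -
  define B where "B v w = A v w + (if v = w then 1 else 0)" for v w
  have "\<forall>v\<in>C. \<forall>w\<in>C. 0 < B v w"
    unfolding B_def using AF_pos_in_component[OF C] AF_nonneg by (auto simp: add_nonneg_pos)
  from perron_positive[OF finite_component[OF C] component_nonempty[OF C] this]
  obtain x s where x: "\<forall>v\<in>C. 0 < x v" "eigen_on C B s x" by blast
  have "mvmult C B x v = mvmult C A x v + x v" if "v \<in> C" for v
  proof -
    have "mvmult C B x v = (\<Sum>w\<in>C. A v w * x w + (if v = w then x w else 0))"
      unfolding B_def mvmult_def by (intro sum.cong) (auto simp: distrib_right)
    also have "\<dots> = mvmult C A x v + x v"
      unfolding mvmult_def sum.distrib using finite_component[OF C] that by simp
    finally show ?thesis .
  qed
  then have eig: "eigen_on C A (s - 1) x" using x(2) unfolding eigen_on_def by (simp add: algebra_simps)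
  then have "spec_rad C A = s - 1"
    by (rule spec_rad_eq_pos_eigval[OF finite_component[OF C] component_nonempty[OF C] nonneg_on_AF x(1)])
  then show ?thesis using x(1) eig by auto
qed

lemma eigen_on_glued:
  assumes C: "C \<in> components G" and x: "eigen_on C A l x"
    and y: "\<forall>v\<in>upclosure G C - C. l * y v = mvmult (upclosure G C - C) A y v + mvmult C A x v"
  shows "eigen_on V A l (\<lambda>v. if v \<in> C then x v else if v \<in> upclosure G C then y v else 0)"
    (is "eigen_on V A l ?X")
  unfolding eigen_on_def
proof
  fix v assume v: "v \<in> V"
  have X: "\<forall>w. w \<notin> upclosure G C \<longrightarrow> ?X w = 0" using component_subset_upclosure[OF C] by auto
  have on_C: "mvmult C A ?X u = mvmult C A x u" for u by (intro mvmult_cong) auto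
  consider "v \<in> C" | "v \<in> upclosure G C - C" | "v \<in> V - upclosure G C" using v by blast
  then show "mvmult V A ?X v = l * ?X v"
  proof cases
    case 1
    then show ?thesis using mvmult_on_component[OF order_supported_AF C _ X] x on_C unfolding eigen_on_def by simp
  next
    case 2
    have "mvmult (upclosure G C - C) A ?X v = mvmult (upclosure G C - C) A y v" by (intro mvmult_cong) auto
    then show ?thesis using 2 y on_C mvmult_upclosure_split[OF C X] by simp
  next
    case 3
    then show ?thesis using mvmult_outside_upclosure[OF order_supported_AF 3 X] component_subset_upclosure[OF C]
      by auto
  qed
qed

lemma xFC_exists:
  assumes H: "F_harmonic k G F C"
  shows "\<exists>X. is_xFC C X \<and> (\<forall>v\<in>C. 0 < X v)"
proof -
  have C: "C \<in> components G" using H by (rule F_harmonic_component)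
  let ?l = "spec_rad C A" and ?D = "upclosure G C - C"
  obtain x where x: "\<forall>v\<in>C. 0 < x v" "eigen_on C A ?l x" using perron_component[OF C] by blast
  have "\<exists>y. (\<forall>v\<in>?D. 0 \<le> y v) \<and> (\<forall>v\<in>?D. ?l * y v = mvmult ?D A y v + mvmult C A x v)"
  proof (cases "?D = {}")
    case False
    then obtain u l' where "l' < ?l" "pos_subinvariant ?D A l' u" using F_harmonic_subinvariant[OF H] by blast
    moreover have "\<forall>v\<in>?D. 0 \<le> mvmult C A x v"
      unfolding mvmult_def using x(1) AF_nonneg by (intro ballI sum_nonneg mult_nonneg_nonneg) (auto simp: less_imp_le)
    ultimately show ?thesis using nonneg_resolvent_solution[OF finite_Diff[OF finite_upclosure] nonneg_on_AF] by blast
  qed auto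
  then obtain y where y: "\<forall>v\<in>?D. 0 \<le> y v" "\<forall>v\<in>?D. ?l * y v = mvmult ?D A y v + mvmult C A x v" by blast
  define X0 where "X0 v = (if v \<in> C then x v else if v \<in> upclosure G C then y v else 0)" for v
  have X0_eig: "eigen_on V A ?l X0" unfolding X0_def using eigen_on_glued[OF C x(2) y(2)] .
  have X0_nonneg: "0 \<le> X0 v" for v unfolding X0_def using x(1) y(1) by (auto simp: less_imp_le)
  have X0_out: "\<forall>v. v \<notin> upclosure G C \<longrightarrow> X0 v = 0"
    unfolding X0_def using component_subset_upclosure[OF C] by auto
  have "0 < sum X0 C"
    using finite_component[OF C] component_nonempty[OF C] x(1) by (intro sum_pos) (auto simp: X0_def)
  also have "\<dots> \<le> sum X0 V"
    using component_subset_verts[OF C] finite_verts X0_nonneg by (intro sum_mono2) auto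
  finally have N: "0 < sum X0 V" .
  define X where "X v = X0 v / sum X0 V" for v
  have "is_xFC C X" unfolding is_xFC_def
    using prob_vec_normalise[OF finite_verts _ N] X0_nonneg eigen_on_normalise[OF X0_eig] X0_out
    unfolding X_def by simp
  moreover have "\<forall>v\<in>C. 0 < X v"
  proof
    fix v assume "v \<in> C"
    then have "X0 v = x v" unfolding X0_def by simp
    then show "0 < X v" unfolding X_def using x(1) N \<open>v \<in> C\<close> by simp
  qed
  ultimately show ?thesis by blast
qed

lemma eigvec_vanishing_on_component:
  assumes C: "C \<in> components G"
    and gap: "upclosure G C - C \<noteq> {} \<Longrightarrow> \<exists>u l'. l' < l \<and> pos_subinvariant (upclosure G C - C) A l' u"
    and eig: "eigen_on V A l z" and z_C: "\<forall>v\<in>C. z v = 0" and z_out: "\<forall>v. v \<notin> upclosure G C \<longrightarrow> z v = 0"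
  shows "z v = 0"
proof -
  let ?D = "upclosure G C - C"
  have "\<forall>v\<in>?D. z v = 0"
  proof (cases "?D = {}")
    case False
    have "eigen_on ?D A l z"
      unfolding eigen_on_def
    proof
      fix v assume v: "v \<in> ?D"
      have "mvmult C A z v = 0" unfolding mvmult_def using z_C by simp
      moreover have "v \<in> V" using v upclosure_subset_verts by blast
      ultimately show "mvmult ?D A z v = l * z v"
        using eig mvmult_upclosure_split[OF C z_out, of A v] unfolding eigen_on_def by simp
    qed
    then show ?thesis
      using gap[OF False] eigvec_vanishes_if_subinvariant[OF finite_Diff[OF finite_upclosure] nonneg_on_AF] by blast
  qed blast
  then show ?thesis using z_C z_out by blast
qed

lemma xFC_unique:
  assumes H: "F_harmonic k G F C" and X: "is_xFC C X" and Xpos: "\<forall>v\<in>C. 0 < X v" and Y: "is_xFC C Y"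
  shows "Y = X"
proof -
  have C: "C \<in> components G" using H by (rule F_harmonic_component)
  let ?l = "spec_rad C A"
  have eigC: "eigen_on C A ?l Z" if "is_xFC C Z" for Z
    using that eigen_on_component[OF order_supported_AF C] unfolding is_xFC_def by blast
  obtain c where c: "\<forall>v\<in>C. Y v = c * X v"
    using nonneg_eigvec_proportional[OF finite_component[OF C] Xpos nonneg_on_AF _ eigC[OF X] _ eigC[OF Y]]
      AF_pos_in_component[OF C] Y component_subset_verts[OF C] unfolding is_xFC_def prob_vec_def by blast
  define Z where "Z v = Y v - c * X v" for v
  have Z_C: "\<forall>v\<in>C. Z v = 0" unfolding Z_def using c by simp
  have Z_out: "\<forall>v. v \<notin> upclosure G C \<longrightarrow> Z v = 0" using X Y unfolding Z_def is_xFC_def by simp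
  have Z_eig: "eigen_on V A ?l Z"
    using X Y unfolding Z_def is_xFC_def eigen_on_def mvmult_diff mvmult_scale by (simp add: algebra_simps)
  have "Z v = 0" for v
    using eigvec_vanishing_on_component[OF C F_harmonic_subinvariant[OF H] Z_eig Z_C Z_out] .
  then have YcX: "Y v = c * X v" for v unfolding Z_def by simp
  have "1 = c * 1" using X Y YcX unfolding is_xFC_def prob_vec_def by (simp add: sum_distrib_left[symmetric])
  then show ?thesis using YcX by auto
qed

lemma xFC:
  assumes H: "F_harmonic k G F C"
  shows "is_xFC C (xFC k G F C)" and "\<forall>v\<in>C. 0 < xFC k G F C v"
proof -
  obtain X where X: "is_xFC C X" "\<forall>v\<in>C. 0 < X v" using xFC_exists[OF H] by blast
  have "xFC k G F C = X" unfolding xFC_eq_The using xFC_unique[OF H X] X(1) by blast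
  then show "is_xFC C (xFC k G F C)" "\<forall>v\<in>C. 0 < xFC k G F C v" using X by auto
qed

text \<open>A maximal component C0 carrying a nonzero coefficient sees no other x_F^C at its
  vertices, so the coefficient must vanish.\<close>

lemma xFC_linear_independent:
  assumes fin: "finite K" and H: "\<forall>C\<in>K. F_harmonic k G F C"
    and zero: "\<And>v. (\<Sum>C\<in>K. s C * xFC k G F C v) = 0"
  shows "\<forall>C\<in>K. s C = 0"
proof (rule ccontr)
  define K' where "K' = {C\<in>K. s C \<noteq> 0}"
  assume "\<not> (\<forall>C\<in>K. s C = 0)"
  then have "K' \<noteq> {}" unfolding K'_def by auto
  moreover have "finite K'" "K' \<subseteq> components G" unfolding K'_def using fin H F_harmonic_component by auto
  ultimately obtain C0 where C0: "C0 \<in> K'" "\<forall>C\<in>K'. comp_le G C0 C \<longrightarrow> C = C0"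
    using exists_maximal_component by blast
  then have C0K: "C0 \<in> K" and HC0: "F_harmonic k G F C0" using H unfolding K'_def by auto
  obtain v where v: "v \<in> C0" using component_nonempty[OF F_harmonic_component[OF HC0]] by auto
  have "s C * xFC k G F C v = 0" if "C \<in> K" "C \<noteq> C0" for C
  proof (cases "s C = 0")
    case False
    have "xFC k G F C v = 0"
    proof (rule ccontr)
      assume "xFC k G F C v \<noteq> 0"
      then have "v \<in> upclosure G C" using xFC(1) H that unfolding is_xFC_def by blast
      then have "comp_le G C0 C" unfolding comp_le_def upclosure_def using v by auto
      then show False using C0 False that unfolding K'_def by auto
    qed
    then show ?thesis by simp
  qed simp
  then have "(\<Sum>C\<in>K. s C * xFC k G F C v) = s C0 * xFC k G F C0 v"
    using sum.remove[OF fin C0K, of "\<lambda>C. s C * xFC k G F C v"] by (simp add: sum.neutral)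
  moreover have "s C0 * xFC k G F C0 v \<noteq> 0" using C0(1) xFC(2)[OF HC0] v unfolding K'_def by force
  ultimately show False using zero by simp
qed

end

section \<open>Harmonic vectors\<close>

locale harmonic_kgraph = well_chosen_kgraph +
  fixes r :: "nat \<Rightarrow> real" and \<beta> :: real and \<psi> :: "'a \<Rightarrow> real"
  assumes no_sources: "no_sources k G" and harmonic: "harmonic_vec k G r \<beta> \<psi>"
begin

definition rho_F :: real where
  "rho_F = (\<Sum>a\<leftarrow>F. \<Prod>i\<leftarrow>[1..<Suc k]. exp (\<beta> * r i) ^ a i)"

lemma psi_vanishes: "v \<notin> V \<Longrightarrow> \<psi> v = 0" using harmonic unfolding harmonic_vec_def by auto

lemma psi_nonneg: "0 \<le> \<psi> v" using harmonic psi_vanishes unfolding harmonic_vec_def by (cases "v \<in> V") auto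

lemma prob_vec_psi: "prob_vec V \<psi>" using harmonic unfolding harmonic_vec_def prob_vec_def by auto

lemma eigen_on_vmatrix_psi: "i \<in> {1..k} \<Longrightarrow> eigen_on V (vmatrix G i) (exp (\<beta> * r i)) \<psi>"
  using harmonic unfolding harmonic_vec_def eigen_on_def mvmult_def by auto

lemma eigen_on_AF_psi: "eigen_on V A rho_F \<psi>"
  unfolding rho_F_def using eigen_on_vmatrix_psi by (intro eigen_on_AF) auto

text \<open>Since there are no sources, every vertex emits an edge of degree e_1, so A_F \<noteq> 0
  and hence F is nonempty.\<close>

lemma F_nonempty: "F \<noteq> []"
proof
  assume F: "F = []"
  obtain v where v: "v \<in> V" using prob_vec_psi unfolding prob_vec_def by fastforce
  have e1: "unitv 1 \<in> Nk k" "unitv 1 \<noteq> 0" using unitv_in_Nk k_pos by (auto simp: unitv_def fun_eq_iff)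
  then obtain p where p: "p \<in> mor G" "rng G p = v" "deg G p = unitv 1"
    using no_sources v unfolding no_sources_def by blast
  then have "0 < A v (src G p)"
    using AF_pos_iff[OF v src_in_verts[OF p(1)]] e1 unfolding paths_def by blast
  then show False using F unfolding AF_def by simp
qed

lemma rho_F_pos: "0 < rho_F"
proof -
  obtain a F' where F: "F = a # F'" using F_nonempty by (cases F) auto
  have pos: "0 < (\<Prod>i\<leftarrow>is. exp (\<beta> * r i) ^ b i)" for b and "is" :: "nat list"
    by (induction "is") auto
  have "0 \<le> (\<Sum>b\<leftarrow>F'. \<Prod>i\<leftarrow>[1..<Suc k]. exp (\<beta> * r i) ^ b i)"
    using pos by (intro sum_list_nonneg) (auto intro: less_imp_le)
  then show ?thesis using pos[of a "[1..<Suc k]"] unfolding rho_F_def by (simp add: F)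
qed

definition supp :: "'a set" where
  "supp = {v\<in>V. 0 < \<psi> v}"

lemma psi_vanishes_off_supp: "v \<notin> supp \<Longrightarrow> \<psi> v = 0"
  using psi_vanishes psi_nonneg unfolding supp_def by (metis mem_Collect_eq order_less_le)

lemma supp_down_closed:
  assumes vw: "vle G v w" and w: "w \<in> supp"
  shows "v \<in> supp"
proof (cases "v = w")
  case False
  have vV: "v \<in> V" "w \<in> V" using vle_in_verts[OF vw] by auto
  have "0 < A v w * \<psi> w" using vle_imp_AF_pos[OF vw False] w unfolding supp_def by auto
  also have "\<dots> \<le> mvmult V A \<psi> v"
    unfolding mvmult_def using finite_verts vV AF_nonneg psi_nonneg by (intro member_le_sum) auto
  also have "\<dots> = rho_F * \<psi> v" using eigen_on_AF_psi vV unfolding eigen_on_def by auto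
  finally show ?thesis using rho_F_pos vV unfolding supp_def by (simp add: zero_less_mult_iff)
qed (use w in simp)

definition max_comps :: "'a set set" where
  "max_comps = {C\<in>components G. C \<subseteq> supp \<and> (\<forall>D\<in>components G. D \<subseteq> supp \<and> comp_le G C D \<longrightarrow> D = C)}"

lemma max_comp_component: "C \<in> max_comps \<Longrightarrow> C \<in> components G"
  unfolding max_comps_def by auto

lemma max_comp_subset_verts: "C \<in> max_comps \<Longrightarrow> C \<subseteq> V"
  using component_subset_verts max_comp_component by blast

lemma psi_pos_on_max_comp: "C \<in> max_comps \<Longrightarrow> v \<in> C \<Longrightarrow> 0 < \<psi> v"
  unfolding max_comps_def supp_def by auto

lemma finite_max_comps: "finite max_comps"
  using finite_components unfolding max_comps_def by (rule rev_finite_subset) auto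

lemma upclosure_max_comp_subset_supp: "C \<in> max_comps \<Longrightarrow> upclosure G C \<subseteq> supp"
  unfolding upclosure_def max_comps_def using supp_down_closed by blast

lemma vle_from_max_comp:
  assumes C: "C \<in> max_comps" and v: "v \<in> C" and vw: "vle G v w" and w: "0 < \<psi> w"
  shows "w \<in> C"
proof -
  have wV: "w \<in> V" using vle_in_verts[OF vw] by auto
  then have "comp_of w \<subseteq> supp"
    using w supp_down_closed unfolding comp_of_def supp_def vequiv_def by auto
  moreover have "comp_le G C (comp_of w)" unfolding comp_le_def using v vw mem_comp_of_self[OF wV] by auto
  ultimately have "comp_of w = C" using C comp_of_in_components[OF wV] unfolding max_comps_def by auto
  then show ?thesis using mem_comp_of_self[OF wV] by auto
qed

lemma eigen_on_max_comp:
  assumes M: "order_supported M" and C: "C \<in> max_comps" and eig: "eigen_on V M l \<psi>"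
  shows "eigen_on C M l \<psi>"
  unfolding eigen_on_def
proof
  fix v assume v: "v \<in> C"
  have "mvmult V M \<psi> v = mvmult C M \<psi> v"
  proof (rule mvmult_restrict[OF finite_verts max_comp_subset_verts[OF C]])
    fix w assume w: "w \<in> V - C"
    show "M v w * \<psi> w = 0"
    proof (cases "0 < \<psi> w")
      case True
      then have "\<not> 0 < M v w" "0 \<le> M v w"
        using M vle_from_max_comp[OF C v] w v max_comp_subset_verts[OF C] unfolding order_supported_def by auto
      then show ?thesis by simp
    qed (use psi_nonneg[of w] in simp)
  qed
  then show "mvmult C M \<psi> v = l * \<psi> v" using eig v max_comp_subset_verts[OF C] unfolding eigen_on_def by auto
qed

lemma spec_rad_max_comp:
  assumes "C \<in> max_comps" "order_supported M" "nonneg_on C M" "eigen_on V M l \<psi>"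
  shows "spec_rad C M = l"
proof -
  have C: "C \<in> components G" using max_comp_component[OF assms(1)] .
  show ?thesis using psi_pos_on_max_comp[OF assms(1)] eigen_on_max_comp[OF assms(2,1,4)]
    by (intro spec_rad_eq_pos_eigval[OF finite_component[OF C] component_nonempty[OF C] assms(3), of \<psi>]) auto
qed

lemma spec_rad_max_comp_AF: "C \<in> max_comps \<Longrightarrow> spec_rad C A = rho_F"
  by (rule spec_rad_max_comp[OF _ order_supported_AF nonneg_on_AF eigen_on_AF_psi])

lemma spec_rad_max_comp_vmatrix:
  "C \<in> max_comps \<Longrightarrow> i \<in> {1..k} \<Longrightarrow> spec_rad C (vmatrix G i) = exp (\<beta> * r i)"
  by (rule spec_rad_max_comp[OF _ order_supported_vmatrix nonneg_on_vmatrix eigen_on_vmatrix_psi])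

lemma subinvariant_if_leaking:
  assumes TV: "T \<subseteq> V" and Tpos: "\<forall>v\<in>T. 0 < \<psi> v"
    and leak: "\<forall>v\<in>T. \<exists>w\<in>V - T. 0 < A v w \<and> 0 < \<psi> w"
  shows "\<exists>l'. l' < rho_F \<and> pos_subinvariant T A l' \<psi>"
proof (cases "T = {}")
  case True
  then show ?thesis using rho_F_pos unfolding pos_subinvariant_def by (intro exI[of _ "rho_F - 1"]) auto
next
  case False
  have finT: "finite T" using TV finite_verts finite_subset by blast
  define b where "b v = mvmult (V - T) A \<psi> v" for v
  have b_pos: "0 < b v" if v: "v \<in> T" for v
  proof -
    obtain w where w: "w \<in> V - T" "0 < A v w" "0 < \<psi> w" using leak v by blast
    have "0 < A v w * \<psi> w" using w by simp
    also have "\<dots> \<le> b v" unfolding b_def mvmult_def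
      using finite_verts w AF_nonneg psi_nonneg by (intro member_le_sum) auto
    finally show ?thesis .
  qed
  have split: "mvmult T A \<psi> v = rho_F * \<psi> v - b v" if v: "v \<in> T" for v
  proof -
    have "mvmult V A \<psi> v = b v + mvmult T A \<psi> v"
      unfolding b_def mvmult_def using sum.subset_diff[OF TV finite_verts] by simp
    then show ?thesis using eigen_on_AF_psi v TV unfolding eigen_on_def by auto
  qed
  define \<delta> where "\<delta> = Min ((\<lambda>v. b v / \<psi> v) ` T)"
  have "0 < \<delta>" unfolding \<delta>_def using finT False b_pos Tpos by auto
  moreover have "mvmult T A \<psi> v \<le> (rho_F - \<delta>) * \<psi> v" if v: "v \<in> T" for v
  proof -
    have "\<delta> \<le> b v / \<psi> v" unfolding \<delta>_def using finT v by auto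
    then show ?thesis using split[OF v] Tpos v by (simp add: le_divide_eq algebra_simps)
  qed
  ultimately show ?thesis using Tpos unfolding pos_subinvariant_def by (intro exI[of _ "rho_F - \<delta>"]) auto
qed

lemma subinvariant_below_max_comp:
  assumes C: "C \<in> max_comps"
  shows "\<exists>l'. l' < rho_F \<and> pos_subinvariant (upclosure G C - C) A l' \<psi>"
proof (rule subinvariant_if_leaking)
  show "upclosure G C - C \<subseteq> V" using upclosure_subset_verts by auto
  show "\<forall>v\<in>upclosure G C - C. 0 < \<psi> v" using upclosure_max_comp_subset_supp[OF C] unfolding supp_def by auto
  show "\<forall>v\<in>upclosure G C - C. \<exists>w\<in>V - (upclosure G C - C). 0 < A v w \<and> 0 < \<psi> w"
  proof
    fix v assume v: "v \<in> upclosure G C - C"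
    then obtain c where c: "c \<in> C" "vle G v c" unfolding upclosure_def by auto
    then have "0 < A v c" using v vle_imp_AF_pos by blast
    then show "\<exists>w\<in>V - (upclosure G C - C). 0 < A v w \<and> 0 < \<psi> w"
      using c max_comp_subset_verts[OF C] psi_pos_on_max_comp[OF C] by blast
  qed
qed

lemma max_comp_F_harmonic:
  assumes C: "C \<in> max_comps"
  shows "F_harmonic k G F C"
proof -
  have Cc: "C \<in> components G" using max_comp_component[OF C] .
  obtain v where v: "v \<in> C" using component_nonempty[OF Cc] by auto
  have "0 < rho_F * \<psi> v" using rho_F_pos psi_pos_on_max_comp[OF C v] by simp
  also have "\<dots> = mvmult C A \<psi> v"
    using eigen_on_max_comp[OF order_supported_AF C eigen_on_AF_psi] v unfolding eigen_on_def by simp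
  finally have "(\<Sum>w\<in>C. A v w * \<psi> w) \<noteq> 0" unfolding mvmult_def by simp
  then obtain w where w: "w \<in> C" "A v w \<noteq> 0" by (metis (no_types, lifting) mult_zero_left sum.neutral)
  then have "0 < A v w" using AF_nonneg[of v w] by simp
  have "spec_rad (upclosure G C - C) A < spec_rad C A" if ne: "upclosure G C - C \<noteq> {}"
  proof -
    obtain l' where "l' < rho_F" "pos_subinvariant (upclosure G C - C) A l' \<psi>"
      using subinvariant_below_max_comp[OF C] by blast
    then show ?thesis
      using spec_rad_le_subinvariant[OF finite_Diff[OF finite_upclosure] ne nonneg_on_AF]
        spec_rad_max_comp_AF[OF C] by fastforce
  qed
  then show ?thesis unfolding F_harmonic_def using Cc nontrivial_if_AF_pos[OF Cc v w(1) \<open>0 < A v w\<close>] by blast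
qed

abbreviation xF :: "'a set \<Rightarrow> 'a \<Rightarrow> real" where
  "xF C \<equiv> xFC k G F C"

lemma is_xFC_max_comp: "C \<in> max_comps \<Longrightarrow> is_xFC C (xF C)"
  using xFC(1)[OF max_comp_F_harmonic] .

lemma xF_pos_on_max_comp: "C \<in> max_comps \<Longrightarrow> v \<in> C \<Longrightarrow> 0 < xF C v"
  using xFC(2)[OF max_comp_F_harmonic] by blast

lemma eigen_on_AF_xF: "C \<in> max_comps \<Longrightarrow> eigen_on V A rho_F (xF C)"
  using is_xFC_max_comp spec_rad_max_comp_AF unfolding is_xFC_def by simp

lemma xF_vanishes_off_upclosure: "C \<in> max_comps \<Longrightarrow> v \<notin> upclosure G C \<Longrightarrow> xF C v = 0"
  using is_xFC_max_comp unfolding is_xFC_def by blast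

lemma xF_vanishes_off_supp: "C \<in> max_comps \<Longrightarrow> v \<notin> supp \<Longrightarrow> xF C v = 0"
  using xF_vanishes_off_upclosure upclosure_max_comp_subset_supp by blast

lemma xF_vanishes_on_other_max_comp:
  assumes C: "C \<in> max_comps" and C': "C' \<in> max_comps" "C' \<noteq> C" and v: "v \<in> C"
  shows "xF C' v = 0"
proof (rule ccontr)
  assume "xF C' v \<noteq> 0"
  then have "v \<in> upclosure G C'" using xF_vanishes_off_upclosure[OF C'(1)] by blast
  then have "comp_le G C C'" unfolding comp_le_def upclosure_def using v by auto
  then show False using C C' max_comp_component unfolding max_comps_def by blast
qed

lemma exists_max_comp_above:
  assumes v: "v \<in> supp"
  shows "\<exists>C\<in>max_comps. \<exists>c\<in>C. vle G v c"
proof -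
  have vV: "v \<in> V" using v unfolding supp_def by auto
  define Q where "Q = {D\<in>components G. D \<subseteq> supp \<and> comp_le G (comp_of v) D}"
  have "comp_of v \<subseteq> supp" using v supp_down_closed unfolding comp_of_def vequiv_def by blast
  then have "comp_of v \<in> Q"
    unfolding Q_def comp_le_def using comp_of_in_components[OF vV] mem_comp_of_self[OF vV] vle_refl[OF vV] by auto
  moreover have "finite Q" unfolding Q_def using finite_components by (rule rev_finite_subset) auto
  ultimately obtain D where D: "D \<in> Q" "\<forall>E\<in>Q. comp_le G D E \<longrightarrow> E = D"
    using exists_maximal_component[of Q] unfolding Q_def by blast
  then have "D \<in> max_comps" unfolding max_comps_def Q_def using comp_le_trans by blast
  moreover obtain a b where "a \<in> comp_of v" "b \<in> D" "vle G a b" using D(1) unfolding Q_def comp_le_def by auto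
  then have "vle G v b" unfolding comp_of_def vequiv_def using vle_trans by blast
  ultimately show ?thesis using \<open>b \<in> D\<close> by blast
qed

text \<open>On a maximal component both \<psi> and x_F^C are Perron vectors of A_F^C, hence proportional.\<close>

definition coeff :: "'a set \<Rightarrow> real" where
  "coeff C = (SOME c. \<forall>v\<in>C. \<psi> v = c * xF C v)"

lemma psi_eq_coeff_xF:
  assumes C: "C \<in> max_comps"
  shows "\<forall>v\<in>C. \<psi> v = coeff C * xF C v" and "0 < coeff C"
proof -
  have Cc: "C \<in> components G" using max_comp_component[OF C] .
  have "\<exists>c. \<forall>v\<in>C. \<psi> v = c * xF C v"
    using nonneg_eigvec_proportional[OF finite_component[OF Cc] _ nonneg_on_AF _ _ _
        eigen_on_max_comp[OF order_supported_AF C eigen_on_AF_psi]]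
      xF_pos_on_max_comp[OF C] AF_pos_in_component[OF Cc] psi_nonneg
      eigen_on_component[OF order_supported_AF Cc _ eigen_on_AF_xF[OF C]] xF_vanishes_off_upclosure[OF C]
    by blast
  then show eq: "\<forall>v\<in>C. \<psi> v = coeff C * xF C v" unfolding coeff_def by (rule someI_ex)
  obtain v where v: "v \<in> C" using component_nonempty[OF Cc] by auto
  then show "0 < coeff C"
    using eq psi_pos_on_max_comp[OF C v] xF_pos_on_max_comp[OF C v] by (metis zero_less_mult_pos2)
qed

lemma psi_decomposition: "\<psi> = (\<lambda>v. \<Sum>C\<in>max_comps. coeff C * xF C v)"
proof -
  define Z where "Z v = \<psi> v - (\<Sum>C\<in>max_comps. coeff C * xF C v)" for v
  define T where "T = supp - \<Union>max_comps"
  have Z_off_supp: "Z v = 0" if "v \<notin> supp" for v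
    unfolding Z_def using psi_vanishes_off_supp[OF that] xF_vanishes_off_supp that by simp
  have Z_max_comp: "Z v = 0" if C: "C \<in> max_comps" and v: "v \<in> C" for C v
  proof -
    have "(\<Sum>C'\<in>max_comps. coeff C' * xF C' v) = coeff C * xF C v"
      using sum.remove[OF finite_max_comps C, of "\<lambda>C'. coeff C' * xF C' v"]
        xF_vanishes_on_other_max_comp[OF C _ _ v] by simp
    then show ?thesis unfolding Z_def using psi_eq_coeff_xF(1)[OF C] v by simp
  qed
  have TV: "T \<subseteq> V" unfolding T_def supp_def by auto
  have Z_outside_T: "\<forall>w\<in>V - T. Z w = 0" unfolding T_def using Z_off_supp Z_max_comp by blast
  have "eigen_on V A rho_F Z"
    unfolding Z_def using eigen_on_AF_psi eigen_on_AF_xF by (intro eigen_on_diff eigen_on_lincomb) auto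
  then have Z_eig: "eigen_on T A rho_F Z"
    using mvmult_restrict[OF finite_verts TV] Z_outside_T TV unfolding eigen_on_def by (simp add: subset_iff)
  have "\<exists>l'. l' < rho_F \<and> pos_subinvariant T A l' \<psi>"
  proof (rule subinvariant_if_leaking[OF TV])
    show "\<forall>v\<in>T. 0 < \<psi> v" unfolding T_def supp_def by auto
    show "\<forall>v\<in>T. \<exists>w\<in>V - T. 0 < A v w \<and> 0 < \<psi> w"
    proof
      fix v assume v: "v \<in> T"
      then obtain C c where c: "C \<in> max_comps" "c \<in> C" "vle G v c"
        using exists_max_comp_above unfolding T_def by blast
      then have "0 < A v c" using v vle_imp_AF_pos unfolding T_def by blast
      then show "\<exists>w\<in>V - T. 0 < A v w \<and> 0 < \<psi> w"
        using c max_comp_subset_verts psi_pos_on_max_comp unfolding T_def by blast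
    qed
  qed
  then have "\<forall>v\<in>T. Z v = 0"
    using eigvec_vanishes_if_subinvariant[OF finite_subset[OF TV finite_verts] nonneg_on_AF _ _ Z_eig] by blast
  then have "Z v = 0" for v using Z_outside_T Z_off_supp TV unfolding supp_def by blast
  then show ?thesis unfolding Z_def by (auto simp: fun_eq_iff)
qed

lemma coeff_sum: "(\<Sum>C\<in>max_comps. coeff C) = 1"
proof -
  have "1 = (\<Sum>v\<in>V. \<Sum>C\<in>max_comps. coeff C * xF C v)"
    using prob_vec_psi psi_decomposition unfolding prob_vec_def by metis
  also have "\<dots> = (\<Sum>C\<in>max_comps. coeff C * sum (xF C) V)" by (subst sum.swap) (simp add: sum_distrib_left)
  also have "\<dots> = (\<Sum>C\<in>max_comps. coeff C)" using is_xFC_max_comp unfolding is_xFC_def prob_vec_def by simp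
  finally show ?thesis by simp
qed

lemma coeff_le_1: "C \<in> max_comps \<Longrightarrow> coeff C \<le> 1"
  using member_le_sum[of C max_comps coeff] finite_max_comps psi_eq_coeff_xF(2) coeff_sum
  by (fastforce intro: less_imp_le)

text \<open>A_i commutes with A_F, so U = A_i x_F^C - e^{\<beta> r_i} x_F^C is again an eigenvector of A_F
  for \<rho>, supported on the upclosure of C; it vanishes on C because x_F^C is proportional to \<psi>
  there, and hence everywhere.\<close>

lemma eigen_on_vmatrix_xF:
  assumes C: "C \<in> max_comps" and i: "i \<in> {1..k}"
  shows "eigen_on V (vmatrix G i) (exp (\<beta> * r i)) (xF C)"
proof -
  have Cc: "C \<in> components G" using max_comp_component[OF C] .
  let ?M = "vmatrix G i" and ?e = "exp (\<beta> * r i)" and ?D = "upclosure G C - C"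
  define U where "U w = mvmult V ?M (xF C) w - ?e * xF C w" for w
  have X_out: "\<forall>w. w \<notin> upclosure G C \<longrightarrow> xF C w = 0" using xF_vanishes_off_upclosure[OF C] by blast
  have U_out: "U v = 0" if "v \<notin> upclosure G C" for v
  proof (cases "v \<in> V")
    case True
    then show ?thesis unfolding U_def using mvmult_outside_upclosure[OF order_supported_vmatrix _ X_out] that X_out by auto
  next
    case False
    then have "paths G (unitv i) v w = {}" for w unfolding paths_def using rng_in_verts by auto
    then show ?thesis unfolding U_def mvmult_def vmatrix_def using X_out that by simp
  qed
  have U_C: "U v = 0" if v: "v \<in> C" for v
  proof -
    have \<psi>C: "eigen_on C ?M ?e \<psi>" using eigen_on_max_comp[OF order_supported_vmatrix C eigen_on_vmatrix_psi[OF i]] .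
    have "mvmult V ?M (xF C) v = mvmult C ?M (xF C) v"
      using mvmult_on_component[OF order_supported_vmatrix Cc v X_out] .
    also have "\<dots> = mvmult C ?M \<psi> v / coeff C"
      using psi_eq_coeff_xF[OF C] unfolding mvmult_divide[symmetric] by (intro mvmult_cong) auto
    also have "\<dots> = ?e * xF C v" using \<psi>C v psi_eq_coeff_xF[OF C] unfolding eigen_on_def by auto
    finally show ?thesis unfolding U_def by simp
  qed
  have U_eig: "eigen_on V A rho_F U" unfolding U_def
    by (intro eigen_on_diff eigen_on_commute[OF vmatrix_commute_AF[OF i]] eigen_on_scale eigen_on_AF_xF[OF C])
  have gap: "\<exists>u l'. l' < rho_F \<and> pos_subinvariant ?D A l' u" if "?D \<noteq> {}"
    using subinvariant_below_max_comp[OF C] by blast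
  have "U v = 0" for v
    by (rule eigvec_vanishing_on_component[OF Cc gap U_eig]) (use U_C U_out in auto)
  then show ?thesis unfolding U_def eigen_on_def by simp
qed

lemma harmonic_xF: "C \<in> max_comps \<Longrightarrow> harmonic_vec k G r \<beta> (xF C)"
  using is_xFC_max_comp[of C] eigen_on_vmatrix_xF[of C] upclosure_subset_verts
  unfolding harmonic_vec_def is_xFC_def prob_vec_def eigen_on_def mvmult_def by blast

lemma decomposition_unique:
  assumes H: "\<forall>C\<in>K. F_harmonic k G F C" and t: "\<forall>C\<in>K. t C \<in> {0<..1}"
    and eq: "\<psi> = (\<lambda>v. \<Sum>C\<in>K. t C * xF C v)"
  shows "K = max_comps" and "\<forall>C\<in>max_comps. t C = coeff C"
proof -
  have "finite K" using finite_components H F_harmonic_component by (metis rev_finite_subset subsetI)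
  define L where "L = max_comps \<union> K"
  define s where "s C = (if C \<in> max_comps then coeff C else 0) - (if C \<in> K then t C else 0)" for C
  have "(\<Sum>C\<in>L. s C * xF C v) = 0" for v
  proof -
    have "(\<Sum>C\<in>L. s C * xF C v)
        = (\<Sum>C\<in>L. if C \<in> max_comps then coeff C * xF C v else 0) - (\<Sum>C\<in>L. if C \<in> K then t C * xF C v else 0)"
      unfolding s_def sum_subtractf[symmetric] by (intro sum.cong) (auto simp: algebra_simps)
    also have "\<dots> = (\<Sum>C\<in>max_comps. coeff C * xF C v) - (\<Sum>C\<in>K. t C * xF C v)"
      unfolding L_def using finite_max_comps \<open>finite K\<close>
      by (simp add: sum.inter_restrict[symmetric] Int_absorb1 Int_absorb2)
    finally show ?thesis using psi_decomposition eq by (metis diff_self)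
  qed
  then have s0: "\<forall>C\<in>L. s C = 0"
    using xFC_linear_independent[of L] finite_max_comps \<open>finite K\<close> H max_comp_F_harmonic unfolding L_def by blast
  have "C \<in> K" if C: "C \<in> max_comps" for C
  proof (rule ccontr)
    assume "C \<notin> K"
    then have "s C = coeff C" unfolding s_def using C by simp
    then show False using s0 C psi_eq_coeff_xF(2)[OF C] unfolding L_def by auto
  qed
  moreover have "C \<in> max_comps" if C: "C \<in> K" for C
  proof (rule ccontr)
    assume "C \<notin> max_comps"
    then have "s C = - t C" unfolding s_def using C by simp
    then show False using s0 C t unfolding L_def by auto
  qed
  ultimately show "K = max_comps" by blast
  then show "\<forall>C\<in>max_comps. t C = coeff C" using s0 unfolding s_def L_def by auto
qed

lemma max_comps_incomparable: "C \<in> max_comps \<Longrightarrow> C' \<in> max_comps \<Longrightarrow> comp_le G C C' \<Longrightarrow> C' = C"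
  unfolding max_comps_def by auto

end

theorem proposition7p9:
  fixes k :: nat and G :: "'a kgraph" and r :: "nat \<Rightarrow> real" and \<beta> :: real
    and \<psi> :: "'a \<Rightarrow> real" and F :: "(nat \<Rightarrow> nat) list"
  assumes "is_kgraph k G" and "finite_kgraph k G" and "no_sources k G"
    and "harmonic_vec k G r \<beta> \<psi>"
    and "well_chosen k G F"
  shows "\<exists>\<C> t.
      (\<forall>C\<in>\<C>. F_harmonic k G F C) \<and> (\<forall>C\<in>\<C>. t C \<in> {0<..1}) \<and>
      \<psi> = (\<lambda>v. \<Sum>C\<in>\<C>. t C * xFC k G F C v) \<and>
      (\<forall>\<C>' t'. (\<forall>C\<in>\<C>'. F_harmonic k G F C) \<and> (\<forall>C\<in>\<C>'. t' C \<in> {0<..1}) \<and>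
               \<psi> = (\<lambda>v. \<Sum>C\<in>\<C>'. t' C * xFC k G F C v)
               \<longrightarrow> \<C>' = \<C> \<and> (\<forall>C\<in>\<C>. t' C = t C)) \<and>
      (\<forall>C\<in>\<C>. positive_comp k G C \<and>
               (\<forall>C'\<in>\<C> - {C}. \<not> comp_le G C C') \<and>
               (\<forall>i\<in>{1..k}. \<beta> * r i = ln (spec_rad C (vmatrix G i))) \<and>
               harmonic_vec k G r \<beta> (xFC k G F C))"
proof -
  interpret harmonic_kgraph k G F r \<beta> \<psi>
    using assms by unfold_locales
  show ?thesis
  proof (intro exI[of _ max_comps] exI[of _ coeff] conjI)
    show "\<forall>C\<in>max_comps. F_harmonic k G F C" using max_comp_F_harmonic by blast
    show "\<forall>C\<in>max_comps. coeff C \<in> {0<..1}" using psi_eq_coeff_xF(2) coeff_le_1 by simp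
    show "\<psi> = (\<lambda>v. \<Sum>C\<in>max_comps. coeff C * xF C v)" by (rule psi_decomposition)
    show "\<forall>K t. (\<forall>C\<in>K. F_harmonic k G F C) \<and> (\<forall>C\<in>K. t C \<in> {0<..1}) \<and>
        \<psi> = (\<lambda>v. \<Sum>C\<in>K. t C * xF C v) \<longrightarrow> K = max_comps \<and> (\<forall>C\<in>max_comps. t C = coeff C)"
      using decomposition_unique by blast
    show "\<forall>C\<in>max_comps. positive_comp k G C \<and> (\<forall>C'\<in>max_comps - {C}. \<not> comp_le G C C') \<and>
        (\<forall>i\<in>{1..k}. \<beta> * r i = ln (spec_rad C (vmatrix G i))) \<and> harmonic_vec k G r \<beta> (xF C)"
      using spec_rad_max_comp_vmatrix max_comps_incomparable harmonic_xF unfolding positive_comp_def by auto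
  qed
qed

end
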